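(* Let $\dot{\mathcal H}$ and $\dot H$ be as described in the context. There exists a generic set $\mathcal R\subset\dot{\mathcal H}$ such that for each $|\psi\rangle\in\mathcal R$, each orthonormal basis $\mathfrak B=\{|k\rangle\}_{k\in\mathbb N}$ of $\dot{\mathcal H}$ and each $p>0$, \[\beta^+_{|\psi\rangle}(p,\mathfrak B)\ge\tfrac13 .\] In particular, for every $|\psi\rangle\in\mathcal R$ and every orthonormal basis $\mathfrak B$ of $\dot{\mathcal H}$, there is $p>0$ with $\beta^+_{|\psi\rangle}(p,\mathfrak B)>0$ (weak dynamical delocalization).
   Context: The Hydrogen atom Hamiltonian is $H=-\Delta-\kappa/|x|$ acting in $\mathrm{L}^2(\mathbb R^3)$, $\kappa>0$. Its eigenvalues are $\lambda_n=-\Lambda/n^2$, $n=1,2,\dots$, with $\Lambda=\kappa^2/4$, each of multiplicity $n^2$, with orthonormal eigenfunctions $|n,l,m\rangle$. $\dot{\mathcal H}$ denotes the closed subspace spanned by all these eigenfunctions, and $\dot H$ the restriction of $H$ to $\dot{\mathcal H}$ (a bounded self-adjoint operator). For $|\psi\rangle\in\dot{\mathcal H}$ let $|\psi(s)\rangle=e^{-is\dot H}|\psi\rangle$. For an orthonormal basis $\mathfrak B=\{|k\rangle\}_{k\in\mathbb N}$ of $\dot{\mathcal H}$, $t>0$ and $p>0$, define $W_{|k\rangle,|\psi\rangle}(t)=\frac1t\int_0^t|\langle k|\psi(s)\rangle|^2\,ds$, the $p$-moment $r^{|\psi\rangle}_{p,\mathfrak B}(t)=\big(\sum_k k^p\,W_{|k\rangle,|\psi\rangle}(t)\big)^{1/p}$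 (possibly $+\infty$), and the upper moment growth exponent $\beta^+_{|\psi\rangle}(p,\mathfrak B)=\limsup_{t\to\infty}\frac{\ln r^{|\psi\rangle}_{p,\mathfrak B}(t)}{\ln t}$ (possibly $+\infty$). A generic set in a complete metric space is a countable intersection of open dense sets. *)

theory Defs
  imports "HOL-Analysis.Analysis"
begin

text \<open>Model of the point-spectral subspace of the Hydrogen Hamiltonian:
  it is identified (unitarily) with the complex l2 space over the labels
  (n,l,m) with n >= 1, 0 <= l < n, |m| <= l, the label (n,l,m) corresponding
  to the eigenfunction |n,l,m>.  The restricted Hamiltonian acts diagonally
  with eigenvalue -Lambda/n^2, Lambda = kappa^2/4.\<close>

type_synonym hlabel = "nat \<times> nat \<times> int"
type_synonym hvec = "hlabel \<Rightarrow> complex"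

definition hyd_labels :: "hlabel set" where
  "hyd_labels = {(n, l, m). 1 \<le> n \<and> l < n \<and> \<bar>m\<bar> \<le> int l}"

definition hyd_space :: "hvec set" where
  "hyd_space = {\<psi>. (\<forall>i. i \<notin> hyd_labels \<longrightarrow> \<psi> i = 0) \<and>
                   (\<lambda>i. (cmod (\<psi> i))\<^sup>2) summable_on UNIV}"

definition hinner :: "hvec \<Rightarrow> hvec \<Rightarrow> complex" where
  "hinner \<phi> \<psi> = infsum (\<lambda>i. cnj (\<phi> i) * \<psi> i) UNIV"

definition hnorm :: "hvec \<Rightarrow> real" where
  "hnorm \<psi> = sqrt (infsum (\<lambda>i. (cmod (\<psi> i))\<^sup>2) UNIV)"

definition hdist :: "hvec \<Rightarrow> hvec \<Rightarrow> real" where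
  "hdist \<phi> \<psi> = hnorm (\<lambda>i. \<phi> i - \<psi> i)"

definition hyd_eigval :: "real \<Rightarrow> nat \<Rightarrow> real" where
  "hyd_eigval \<kappa> n = - (\<kappa>\<^sup>2 / 4) / (real n)\<^sup>2"

definition hyd_evol :: "real \<Rightarrow> real \<Rightarrow> hvec \<Rightarrow> hvec" where
  "hyd_evol \<kappa> s \<psi> = (\<lambda>(n, l, m). exp (- \<i> * complex_of_real (s * hyd_eigval \<kappa> n)) * \<psi> (n, l, m))"

text \<open>Orthonormal basis indexed by N = {1,2,...} (values at index 0 are irrelevant).\<close>
definition hyd_onb :: "(nat \<Rightarrow> hvec) \<Rightarrow> bool" where
  "hyd_onb B \<longleftrightarrow>
     (\<forall>k\<ge>1. B k \<in> hyd_space) \<and>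
     (\<forall>j\<ge>1. \<forall>k\<ge>1. hinner (B j) (B k) = (if j = k then 1 else 0)) \<and>
     (\<forall>\<psi>\<in>hyd_space. (\<forall>k\<ge>1. hinner (B k) \<psi> = 0) \<longrightarrow> \<psi> = (\<lambda>_. 0))"

definition hyd_W :: "real \<Rightarrow> hvec \<Rightarrow> hvec \<Rightarrow> real \<Rightarrow> real" where
  "hyd_W \<kappa> b \<psi> t = (1 / t) * integral {0..t} (\<lambda>s. (cmod (hinner b (hyd_evol \<kappa> s \<psi>)))\<^sup>2)"

definition hyd_moment_sum :: "real \<Rightarrow> real \<Rightarrow> (nat \<Rightarrow> hvec) \<Rightarrow> hvec \<Rightarrow> real \<Rightarrow> ereal" where
  "hyd_moment_sum \<kappa> p B \<psi> t =
     (\<Sum>k. if k = 0 then 0 else ereal (real k powr p * hyd_W \<kappa> (B k) \<psi> t))"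

definition hyd_moment :: "real \<Rightarrow> real \<Rightarrow> (nat \<Rightarrow> hvec) \<Rightarrow> hvec \<Rightarrow> real \<Rightarrow> ereal" where
  "hyd_moment \<kappa> p B \<psi> t =
     (let S = hyd_moment_sum \<kappa> p B \<psi> t in
      if S = \<infinity> then \<infinity> else ereal (real_of_ereal S powr (1 / p)))"

definition hyd_beta_plus :: "real \<Rightarrow> hvec \<Rightarrow> real \<Rightarrow> (nat \<Rightarrow> hvec) \<Rightarrow> ereal" where
  "hyd_beta_plus \<kappa> \<psi> p B =
     Limsup at_top (\<lambda>t::real. let r = hyd_moment \<kappa> p B \<psi> t in
        if r = \<infinity> then \<infinity> else ereal (ln (real_of_ereal r) / ln t))"

definition hyd_open :: "hvec set \<Rightarrow> bool" where
  "hyd_open U \<longleftrightarrow> U \<subseteq> hyd_space \<and>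
     (\<forall>x\<in>U. \<exists>e>0. \<forall>y\<in>hyd_space. hdist y x < e \<longrightarrow> y \<in> U)"

definition hyd_dense :: "hvec set \<Rightarrow> bool" where
  "hyd_dense U \<longleftrightarrow> (\<forall>x\<in>hyd_space. \<forall>e>0. \<exists>y\<in>U. hdist y x < e)"

definition hyd_generic :: "hvec set \<Rightarrow> bool" where
  "hyd_generic R \<longleftrightarrow>
     (\<exists>F :: nat \<Rightarrow> hvec set. (\<forall>j. hyd_open (F j) \<and> hyd_dense (F j)) \<and> R = (\<Inter>j. F j))"

end

theory Submission
  imports Defs "HOL-Real_Asymp.Real_Asymp"
begin

text \<open>A wave packet \<open>a (|L+1,0,0> + ... + |2L,0,0>)\<close> has frequency gaps of order
  \<open>\<kappa>\<^sup>2/L\<^sup>3\<close>, so up to a time \<open>t >> L\<^sup>3 log L\<close> its time-averaged overlap with any \<open>N\<close>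
  orthonormal vectors is about \<open>N|a|\<^sup>2\<close>, far below its mass \<open>L|a|\<^sup>2\<close> when \<open>N << L\<close>.
  A state close to such a packet therefore keeps, on time average, a fixed part of its mass
  beyond the \<open>N\<close>-th vector of an arbitrary basis, and its \<open>p\<close>-th moment at time \<open>t\<close> is of
  order at least \<open>N\<^sup>p\<close>. With \<open>t = L\<^bsup>3+3\<delta>\<^esup>\<close> and \<open>N \<approx> t\<^bsup>1/3-\<delta>\<^esup>\<close> this gives moments of order
  \<open>t\<^bsup>p(1/3-\<delta>)-\<delta>\<^esup>\<close>. These conditions are open in the state, and adding a small packet at
  very high levels to a state supported on finitely many levels shows that they are dense;
  intersecting over \<open>\<delta> \<rightarrow> 0\<close> gives the residual set.\<close>

section \<open>Square-summable sequences on the hydrogen labels\<close>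

lemma hyd_space_summable: "x \<in> hyd_space \<Longrightarrow> (\<lambda>i. (cmod (x i))\<^sup>2) summable_on UNIV"
  by (simp add: hyd_space_def)

lemma hyd_space_vanishes: "x \<in> hyd_space \<Longrightarrow> i \<notin> hyd_labels \<Longrightarrow> x i = 0"
  unfolding hyd_space_def by blast

lemma hyd_spaceI:
  assumes "\<And>i. i \<notin> hyd_labels \<Longrightarrow> x i = 0" and "(\<lambda>i. (cmod (x i))\<^sup>2) summable_on UNIV"
  shows "x \<in> hyd_space"
  using assms by (simp add: hyd_space_def)

lemma hyd_space_zero [simp]: "(\<lambda>_. 0) \<in> hyd_space"
  by (simp add: hyd_space_def)

lemma hyd_space_add:
  assumes "x \<in> hyd_space" "y \<in> hyd_space"
  shows "(\<lambda>i. x i + y i) \<in> hyd_space"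
proof (rule hyd_spaceI)
  show "(\<lambda>i. (cmod (x i + y i))\<^sup>2) summable_on UNIV"
  proof (rule summable_on_comparison_test)
    show "(\<lambda>i. 2 * (cmod (x i))\<^sup>2 + 2 * (cmod (y i))\<^sup>2) summable_on UNIV"
      using assms by (intro summable_on_add summable_on_cmult_right hyd_space_summable)
    have "(a + b)\<^sup>2 \<le> 2 * a\<^sup>2 + 2 * b\<^sup>2" for a b :: real
      using sum_squares_ge_zero[of "a - b" 0] by (simp add: power2_eq_square algebra_simps)
    then show "(cmod (x i + y i))\<^sup>2 \<le> 2 * (cmod (x i))\<^sup>2 + 2 * (cmod (y i))\<^sup>2" for i
      by (meson norm_ge_zero norm_triangle_ineq order_trans power_mono)
  qed simp
qed (use assms in \<open>simp add: hyd_space_vanishes\<close>)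

lemma hyd_space_mult:
  assumes "x \<in> hyd_space"
  shows "(\<lambda>i. c * x i) \<in> hyd_space"
proof (rule hyd_spaceI)
  show "(\<lambda>i. (cmod (c * x i))\<^sup>2) summable_on UNIV"
    using summable_on_cmult_right[OF hyd_space_summable[OF assms], of "(cmod c)\<^sup>2"]
    by (simp add: norm_mult power_mult_distrib)
qed (use assms in \<open>simp add: hyd_space_vanishes\<close>)

lemma hyd_space_uminus: "x \<in> hyd_space \<Longrightarrow> (\<lambda>i. - x i) \<in> hyd_space"
  using hyd_space_mult[of x "-1"] by simp

lemma hyd_space_diff: "x \<in> hyd_space \<Longrightarrow> y \<in> hyd_space \<Longrightarrow> (\<lambda>i. x i - y i) \<in> hyd_space"
  using hyd_space_add[OF _ hyd_space_uminus, of x y] by simp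

lemma hyd_space_sum:
  "(\<And>k. k \<in> K \<Longrightarrow> f k \<in> hyd_space) \<Longrightarrow> (\<lambda>i. \<Sum>k\<in>K. f k i) \<in> hyd_space"
  by (induction K rule: infinite_finite_induct) (simp_all add: hyd_space_add)

lemma hyd_space_cnj_mult_abs_summable:
  assumes "x \<in> hyd_space" "y \<in> hyd_space"
  shows "(\<lambda>i. norm (cnj (x i) * y i)) summable_on UNIV"
proof (rule summable_on_comparison_test)
  show "(\<lambda>i. (cmod (x i))\<^sup>2 + (cmod (y i))\<^sup>2) summable_on UNIV"
    using assms by (intro summable_on_add hyd_space_summable)
  have "a * b \<le> a\<^sup>2 + b\<^sup>2" if "a \<ge> 0" "b \<ge> 0" for a b :: real
  proof -
    have "2 * (a * b) \<le> a\<^sup>2 + b\<^sup>2"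
      using sum_squares_ge_zero[of "a - b" 0] by (simp add: power2_eq_square algebra_simps)
    then show ?thesis using mult_nonneg_nonneg[OF that] by linarith
  qed
  then show "norm (cnj (x i) * y i) \<le> (cmod (x i))\<^sup>2 + (cmod (y i))\<^sup>2" for i
    by (simp add: norm_mult)
qed simp

lemma hyd_space_cnj_mult_summable:
  "x \<in> hyd_space \<Longrightarrow> y \<in> hyd_space \<Longrightarrow> (\<lambda>i. cnj (x i) * y i) summable_on UNIV"
  by (rule abs_summable_summable, rule hyd_space_cnj_mult_abs_summable)

lemma infsum_norm_power2_nonneg: "infsum (\<lambda>i. (cmod (x i))\<^sup>2) A \<ge> 0"
  by (rule infsum_nonneg) simp

lemma hnorm_power2: "(hnorm x)\<^sup>2 = infsum (\<lambda>i. (cmod (x i))\<^sup>2) UNIV"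
  unfolding hnorm_def using infsum_norm_power2_nonneg by simp

lemma hnorm_nonneg [simp]: "hnorm x \<ge> 0"
  unfolding hnorm_def using infsum_norm_power2_nonneg by simp

lemma sum_power2_le_hnorm_power2:
  assumes "x \<in> hyd_space" "finite F"
  shows "(\<Sum>i\<in>F. (cmod (x i))\<^sup>2) \<le> (hnorm x)\<^sup>2"
  unfolding hnorm_power2 using assms by (intro finite_sum_le_infsum hyd_space_summable) auto

lemma L2_set_le_hnorm:
  assumes "x \<in> hyd_space" "finite F"
  shows "L2_set (\<lambda>i. cmod (x i)) F \<le> hnorm x"
  unfolding L2_set_def using sum_power2_le_hnorm_power2[OF assms] by (simp add: real_le_lsqrt)

lemma norm_le_hnorm: "x \<in> hyd_space \<Longrightarrow> cmod (x i) \<le> hnorm x"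
  using L2_set_le_hnorm[of x "{i}"] by simp

lemma hinner_self:
  assumes x: "x \<in> hyd_space"
  shows "hinner x x = complex_of_real ((hnorm x)\<^sup>2)"
proof -
  have "hinner x x = infsum (\<lambda>i. complex_of_real ((cmod (x i))\<^sup>2)) UNIV"
    unfolding hinner_def by (intro infsum_cong) (metis complex_norm_square mult.commute of_real_power)
  also have "\<dots> = complex_of_real ((hnorm x)\<^sup>2)"
    unfolding hnorm_power2 using hyd_space_summable[OF x]
    by (intro infsumI has_sum_of_real has_sum_infsum)
  finally show ?thesis .
qed

lemma hnorm_power2_hinner: "x \<in> hyd_space \<Longrightarrow> (hnorm x)\<^sup>2 = Re (hinner x x)"
  by (simp add: hinner_self del: of_real_power)

lemma hinner_commute: "hinner y x = cnj (hinner x y)"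
  unfolding hinner_def by (simp add: mult.commute flip: infsum_cnj)

lemma hinner_add_right:
  "x \<in> hyd_space \<Longrightarrow> y \<in> hyd_space \<Longrightarrow> z \<in> hyd_space \<Longrightarrow>
   hinner x (\<lambda>i. y i + z i) = hinner x y + hinner x z"
  unfolding hinner_def by (simp add: distrib_left infsum_add hyd_space_cnj_mult_summable)

lemma hinner_add_left:
  "x \<in> hyd_space \<Longrightarrow> y \<in> hyd_space \<Longrightarrow> z \<in> hyd_space \<Longrightarrow>
   hinner (\<lambda>i. y i + z i) x = hinner y x + hinner z x"
  by (subst (1 2 3) hinner_commute) (simp add: hinner_add_right)

lemma hinner_mult_right: "hinner x (\<lambda>i. c * y i) = c * hinner x y"
  unfolding hinner_def by (simp add: infsum_cmult_right' mult.left_commute)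

lemma hinner_mult_left: "hinner (\<lambda>i. c * x i) y = cnj c * hinner x y"
  unfolding hinner_def by (simp add: infsum_cmult_right' mult.assoc)

lemma hinner_diff_right:
  "x \<in> hyd_space \<Longrightarrow> y \<in> hyd_space \<Longrightarrow> z \<in> hyd_space \<Longrightarrow>
   hinner x (\<lambda>i. y i - z i) = hinner x y - hinner x z"
  using hinner_add_right[OF _ _ hyd_space_uminus, of x y z] hinner_mult_right[of x "-1" z] by simp

lemma hinner_sum_right:
  assumes "x \<in> hyd_space" "\<And>k. k \<in> K \<Longrightarrow> f k \<in> hyd_space"
  shows "hinner x (\<lambda>i. \<Sum>k\<in>K. f k i) = (\<Sum>k\<in>K. hinner x (f k))"
  using assms(2)
proof (induction K rule: infinite_finite_induct)
  case (insert a F)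
  then show ?case
    using hinner_add_right[OF assms(1) _ hyd_space_sum, of "f a" F f] by simp
qed (simp_all add: hinner_def)

lemma hinner_sum_left:
  "x \<in> hyd_space \<Longrightarrow> (\<And>k. k \<in> K \<Longrightarrow> f k \<in> hyd_space) \<Longrightarrow>
   hinner (\<lambda>i. \<Sum>k\<in>K. f k i) x = (\<Sum>k\<in>K. hinner (f k) x)"
  by (subst hinner_commute) (simp add: hinner_sum_right flip: hinner_commute)

lemma hinner_cauchy_schwarz:
  assumes "x \<in> hyd_space" "y \<in> hyd_space"
  shows "cmod (hinner x y) \<le> hnorm x * hnorm y"
proof -
  have "cmod (hinner x y) \<le> infsum (\<lambda>i. norm (cnj (x i) * y i)) UNIV"
    unfolding hinner_def by (rule norm_infsum_bound, rule hyd_space_cnj_mult_abs_summable[OF assms])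
  also have "\<dots> \<le> hnorm x * hnorm y"
  proof (rule infsum_le_finite_sums[OF hyd_space_cnj_mult_abs_summable[OF assms]])
    fix F :: "hlabel set" assume "finite F"
    have "(\<Sum>i\<in>F. norm (cnj (x i) * y i)) \<le> L2_set (\<lambda>i. cmod (x i)) F * L2_set (\<lambda>i. cmod (y i)) F"
      using L2_set_mult_ineq[of "\<lambda>i. cmod (x i)" "\<lambda>i. cmod (y i)" F] by (simp add: norm_mult)
    also have "\<dots> \<le> hnorm x * hnorm y"
      using \<open>finite F\<close> assms by (intro mult_mono L2_set_le_hnorm) auto
    finally show "(\<Sum>i\<in>F. norm (cnj (x i) * y i)) \<le> hnorm x * hnorm y" .
  qed
  finally show ?thesis .
qed

lemma hnorm_add_power2:
  assumes "x \<in> hyd_space" "y \<in> hyd_space"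
  shows "(hnorm (\<lambda>i. x i + y i))\<^sup>2 = (hnorm x)\<^sup>2 + (hnorm y)\<^sup>2 + 2 * Re (hinner x y)"
proof -
  have "hinner (\<lambda>i. x i + y i) (\<lambda>i. x i + y i) = hinner x x + hinner x y + (hinner y x + hinner y y)"
    using assms by (simp add: hyd_space_add hinner_add_left hinner_add_right)
  then show ?thesis
    using assms by (simp add: hinner_self hyd_space_add hinner_commute[of y x] complex_eq_iff)
qed

lemma hnorm_triangle:
  assumes "x \<in> hyd_space" "y \<in> hyd_space"
  shows "hnorm (\<lambda>i. x i + y i) \<le> hnorm x + hnorm y"
proof (rule power2_le_imp_le)
  have "Re (hinner x y) \<le> hnorm x * hnorm y"
    using complex_Re_le_cmod[of "hinner x y"] hinner_cauchy_schwarz[OF assms] by linarith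
  then show "(hnorm (\<lambda>i. x i + y i))\<^sup>2 \<le> (hnorm x + hnorm y)\<^sup>2"
    using hnorm_add_power2[OF assms] by (simp add: power2_sum)
qed simp

lemma hnorm_minus_commute: "hnorm (\<lambda>i. x i - y i) = hnorm (\<lambda>i. y i - x i)"
  unfolding hnorm_def by (simp add: norm_minus_commute)

lemma hdist_commute: "hdist x y = hdist y x"
  unfolding hdist_def by (rule hnorm_minus_commute)

lemma hdist_triangle:
  assumes "x \<in> hyd_space" "y \<in> hyd_space" "z \<in> hyd_space"
  shows "hdist x z \<le> hdist x y + hdist y z"
  using hnorm_triangle[OF hyd_space_diff[OF assms(1,2)] hyd_space_diff[OF assms(2,3)]]
  by (simp add: hdist_def)

lemma abs_hnorm_diff_le_hdist:
  assumes "x \<in> hyd_space" "y \<in> hyd_space"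
  shows "\<bar>hnorm x - hnorm y\<bar> \<le> hdist x y"
  using hdist_triangle[OF assms(1) assms(2) hyd_space_zero] hdist_triangle[OF assms(2) assms(1) hyd_space_zero]
  by (simp add: hdist_def hnorm_minus_commute[of x y])

lemma hyd_space_if_finite_sums_bounded:
  assumes "\<And>i. i \<notin> hyd_labels \<Longrightarrow> x i = 0"
    and "\<And>F. finite F \<Longrightarrow> (\<Sum>i\<in>F. (cmod (x i))\<^sup>2) \<le> C"
  shows "x \<in> hyd_space" and "(hnorm x)\<^sup>2 \<le> C"
proof -
  have summable: "(\<lambda>i. (cmod (x i))\<^sup>2) summable_on UNIV"
    using assms(2) by (intro nonneg_bdd_above_summable_on bdd_aboveI) auto
  then show "x \<in> hyd_space" using assms(1) by (rule hyd_spaceI[rotated])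
  show "(hnorm x)\<^sup>2 \<le> C"
    unfolding hnorm_power2 using summable assms(2) by (rule infsum_le_finite_sums)
qed

lemma hnorm_pointwise_limit_diff_le:
  assumes w: "\<And>m. w m \<in> hyd_space" and x: "x \<in> hyd_space"
    and lim: "\<And>i. (\<lambda>m. w m i) \<longlonglongrightarrow> v i"
    and bound: "\<And>m. m \<ge> M \<Longrightarrow> hdist (w m) x \<le> e"
  shows "(\<lambda>i. v i - x i) \<in> hyd_space" and "hnorm (\<lambda>i. v i - x i) \<le> e"
proof -
  have vanish: "v i - x i = 0" if "i \<notin> hyd_labels" for i
    using LIMSEQ_unique[OF lim[of i]] hyd_space_vanishes[OF w that] hyd_space_vanishes[OF x that]
    by simp
  have e: "e \<ge> 0" using bound[of M] by (simp add: hdist_def) (meson hnorm_nonneg order_trans)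
  have "(\<Sum>i\<in>F. (cmod (v i - x i))\<^sup>2) \<le> e\<^sup>2" if F: "finite F" for F
  proof (rule LIMSEQ_le_const2)
    show "(\<lambda>m. \<Sum>i\<in>F. (cmod (w m i - x i))\<^sup>2) \<longlonglongrightarrow> (\<Sum>i\<in>F. (cmod (v i - x i))\<^sup>2)"
      by (intro tendsto_intros lim)
    have "(\<Sum>i\<in>F. (cmod (w m i - x i))\<^sup>2) \<le> e\<^sup>2" if "m \<ge> M" for m
    proof -
      have "(\<Sum>i\<in>F. (cmod (w m i - x i))\<^sup>2) \<le> (hdist (w m) x)\<^sup>2"
        unfolding hdist_def using F x by (intro sum_power2_le_hnorm_power2 hyd_space_diff w)
      also have "\<dots> \<le> e\<^sup>2"
        using bound[OF that] by (intro power_mono) (simp_all add: hdist_def)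
      finally show ?thesis .
    qed
    then show "\<exists>N. \<forall>m\<ge>N. (\<Sum>i\<in>F. (cmod (w m i - x i))\<^sup>2) \<le> e\<^sup>2" by blast
  qed
  then have "(\<lambda>i. v i - x i) \<in> hyd_space" "(hnorm (\<lambda>i. v i - x i))\<^sup>2 \<le> e\<^sup>2"
    using hyd_space_if_finite_sums_bounded[of "\<lambda>i. v i - x i", OF vanish] by auto
  then show "(\<lambda>i. v i - x i) \<in> hyd_space" "hnorm (\<lambda>i. v i - x i) \<le> e"
    using e by (auto intro: power2_le_imp_le)
qed

lemma hyd_space_complete:
  assumes w: "\<And>K. w K \<in> hyd_space"
    and Cauchy: "\<And>e. e > 0 \<Longrightarrow> \<exists>M. \<forall>m\<ge>M. \<forall>n\<ge>M. hdist (w m) (w n) < e"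
  obtains v where "v \<in> hyd_space" "(\<lambda>K. hdist v (w K)) \<longlonglongrightarrow> 0"
proof -
  have "Cauchy (\<lambda>K. w K i)" for i
  proof (rule metric_CauchyI)
    fix e :: real assume "e > 0"
    with Cauchy obtain M where M: "\<forall>m\<ge>M. \<forall>n\<ge>M. hdist (w m) (w n) < e" by blast
    have "dist (w m i) (w n i) < e" if "m \<ge> M" "n \<ge> M" for m n
    proof -
      have "dist (w m i) (w n i) \<le> hdist (w m) (w n)"
        unfolding hdist_def dist_norm using norm_le_hnorm[OF hyd_space_diff[OF w w]] .
      also have "\<dots> < e" using M that by blast
      finally show ?thesis .
    qed
    then show "\<exists>M. \<forall>m\<ge>M. \<forall>n\<ge>M. dist (w m i) (w n i) < e" by blast
  qed
  then have "convergent (\<lambda>K. w K i)" for i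
    by (simp add: Cauchy_convergent_iff)
  define v where "v i = lim (\<lambda>K. w K i)" for i
  have lim: "(\<lambda>K. w K i) \<longlonglongrightarrow> v i" for i
    unfolding v_def using \<open>convergent (\<lambda>K. w K i)\<close> by (rule convergent_LIMSEQ_iff[THEN iffD1])
  have close: "(\<lambda>i. v i - w K i) \<in> hyd_space \<and> hnorm (\<lambda>i. v i - w K i) \<le> e"
    if M: "\<forall>m\<ge>M. \<forall>n\<ge>M. hdist (w m) (w n) < e" and "K \<ge> M" for e M K
    using hnorm_pointwise_limit_diff_le[where x="w K" and M=M and e=e, OF w w lim] M \<open>K \<ge> M\<close>
    by (simp add: less_imp_le)
  obtain M where "\<forall>m\<ge>M. \<forall>n\<ge>M. hdist (w m) (w n) < 1" using Cauchy[of 1] by auto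
  then have "(\<lambda>i. (v i - w M i) + w M i) \<in> hyd_space"
    using close[of M 1 M] by (intro hyd_space_add w) auto
  then have v: "v \<in> hyd_space" by simp
  have "(\<lambda>K. hdist v (w K)) \<longlonglongrightarrow> 0"
  proof (rule LIMSEQ_I)
    fix e :: real assume "e > 0"
    then obtain M where M: "\<forall>m\<ge>M. \<forall>n\<ge>M. hdist (w m) (w n) < e / 2"
      using Cauchy[of "e / 2"] by auto
    have "norm (hdist v (w K)) < e" if "K \<ge> M" for K
      using close[OF M that] \<open>e > 0\<close> by (simp add: hdist_def)
    then show "\<exists>M. \<forall>K\<ge>M. norm (hdist v (w K) - 0) < e" by auto
  qed
  with v show thesis by (rule that)
qed

section \<open>Orthonormal families and Parseval's identity\<close>

definition hyd_orthonormal :: "nat set \<Rightarrow> (nat \<Rightarrow> hvec) \<Rightarrow> bool" where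
  "hyd_orthonormal K B \<longleftrightarrow> (\<forall>k\<in>K. B k \<in> hyd_space) \<and>
     (\<forall>j\<in>K. \<forall>k\<in>K. hinner (B j) (B k) = (if j = k then 1 else 0))"

definition hyd_lincomb :: "(nat \<Rightarrow> complex) \<Rightarrow> nat set \<Rightarrow> (nat \<Rightarrow> hvec) \<Rightarrow> hvec" where
  "hyd_lincomb a K B = (\<lambda>i. \<Sum>k\<in>K. a k * B k i)"

lemma hyd_orthonormal_subset: "hyd_orthonormal K B \<Longrightarrow> K' \<subseteq> K \<Longrightarrow> hyd_orthonormal K' B"
  unfolding hyd_orthonormal_def by blast

lemma hyd_orthonormal_in_space: "hyd_orthonormal K B \<Longrightarrow> k \<in> K \<Longrightarrow> B k \<in> hyd_space"
  unfolding hyd_orthonormal_def by blast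

lemma hyd_onb_orthonormal: "hyd_onb B \<Longrightarrow> K \<subseteq> {1..} \<Longrightarrow> hyd_orthonormal K B"
  unfolding hyd_onb_def hyd_orthonormal_def by (auto simp: subset_iff)

lemma hyd_onb_in_space: "hyd_onb B \<Longrightarrow> k \<ge> 1 \<Longrightarrow> B k \<in> hyd_space"
  unfolding hyd_onb_def by auto

lemma hyd_onb_complete:
  "hyd_onb B \<Longrightarrow> \<psi> \<in> hyd_space \<Longrightarrow> (\<And>k. k \<ge> 1 \<Longrightarrow> hinner (B k) \<psi> = 0) \<Longrightarrow> \<psi> = (\<lambda>_. 0)"
  unfolding hyd_onb_def by blast

lemma hyd_orthonormal_hnorm:
  assumes "hyd_orthonormal K B" "k \<in> K"
  shows "hnorm (B k) = 1"
proof -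
  have "(hnorm (B k))\<^sup>2 = 1"
    using assms by (simp add: hnorm_power2_hinner hyd_orthonormal_in_space) (simp add: hyd_orthonormal_def)
  then show ?thesis using hnorm_nonneg[of "B k"] by (auto simp: power2_eq_1_iff)
qed

lemma hyd_onb_hnorm: "hyd_onb B \<Longrightarrow> k \<ge> 1 \<Longrightarrow> hnorm (B k) = 1"
  using hyd_orthonormal_hnorm[OF hyd_onb_orthonormal[of B "{1..}"]] by simp

lemma hyd_lincomb_in_space: "hyd_orthonormal K B \<Longrightarrow> hyd_lincomb a K B \<in> hyd_space"
  unfolding hyd_lincomb_def by (intro hyd_space_sum hyd_space_mult hyd_orthonormal_in_space)

lemma hyd_lincomb_diff:
  "finite K' \<Longrightarrow> K \<subseteq> K' \<Longrightarrow>
   (\<lambda>i. hyd_lincomb a K' B i - hyd_lincomb a K B i) = hyd_lincomb a (K' - K) B"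
  unfolding hyd_lincomb_def by (simp add: sum_diff)

lemma hinner_lincomb_right:
  "hyd_orthonormal K B \<Longrightarrow> x \<in> hyd_space \<Longrightarrow>
   hinner x (hyd_lincomb a K B) = (\<Sum>k\<in>K. a k * hinner x (B k))"
  unfolding hyd_lincomb_def
  by (simp add: hinner_sum_right hyd_space_mult hyd_orthonormal_in_space hinner_mult_right)

lemma hinner_lincomb_left:
  "hyd_orthonormal K B \<Longrightarrow> x \<in> hyd_space \<Longrightarrow>
   hinner (hyd_lincomb a K B) x = (\<Sum>k\<in>K. cnj (a k) * hinner (B k) x)"
  unfolding hyd_lincomb_def
  by (simp add: hinner_sum_left hyd_space_mult hyd_orthonormal_in_space hinner_mult_left)

lemma hinner_orthonormal_lincomb:
  assumes "hyd_orthonormal K B" "finite K" "j \<in> K"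
  shows "hinner (B j) (hyd_lincomb a K B) = a j"
proof -
  have "hinner (B j) (hyd_lincomb a K B) = (\<Sum>k\<in>K. if k = j then a j else 0)"
    using assms unfolding hinner_lincomb_right[OF assms(1) hyd_orthonormal_in_space[OF assms(1,3)]]
    by (intro sum.cong) (auto simp: hyd_orthonormal_def)
  then show ?thesis using assms by simp
qed

lemma hnorm_lincomb_power2:
  assumes "hyd_orthonormal K B" "finite K"
  shows "(hnorm (hyd_lincomb a K B))\<^sup>2 = (\<Sum>k\<in>K. (cmod (a k))\<^sup>2)"
proof -
  have "(hnorm (hyd_lincomb a K B))\<^sup>2 = Re (\<Sum>k\<in>K. cnj (a k) * a k)"
    using assms by (simp add: hnorm_power2_hinner hyd_lincomb_in_space hinner_lincomb_left
        hinner_orthonormal_lincomb)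
  also have "\<dots> = (\<Sum>k\<in>K. (cmod (a k))\<^sup>2)"
    by (simp add: cmod_power2 del: Re_sum) (simp add: power2_eq_square)
  finally show ?thesis .
qed

lemma bessel_inequality:
  assumes "hyd_orthonormal K B" "finite K" "v \<in> hyd_space"
  shows "(\<Sum>k\<in>K. (cmod (hinner (B k) v))\<^sup>2) \<le> (hnorm v)\<^sup>2"
proof -
  define w where "w = hyd_lincomb (\<lambda>k. hinner (B k) v) K B"
  define r where "r = (\<lambda>i. v i - w i)"
  have w: "w \<in> hyd_space" and r: "r \<in> hyd_space"
    using assms by (simp_all add: w_def r_def hyd_lincomb_in_space hyd_space_diff)
  have "hinner (B k) r = 0" if "k \<in> K" for k
    using assms that w
    by (simp add: r_def w_def hinner_diff_right hyd_orthonormal_in_space hinner_orthonormal_lincomb)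
  then have "hinner w r = 0"
    unfolding w_def using assms(1) r by (simp add: hinner_lincomb_left)
  moreover have "v = (\<lambda>i. w i + r i)" by (simp add: r_def)
  ultimately have "(hnorm v)\<^sup>2 = (hnorm w)\<^sup>2 + (hnorm r)\<^sup>2"
    using hnorm_add_power2[OF w r] by simp
  then show ?thesis
    using hnorm_lincomb_power2[OF assms(1,2)] by (simp add: w_def)
qed

lemma hdist_lincomb_partial_sums:
  assumes orth: "hyd_orthonormal {1..} B" and "n \<le> m"
  shows "hdist (hyd_lincomb c {1..m} B) (hyd_lincomb c {1..n} B)
    = sqrt ((\<Sum>k=1..m. (cmod (c k))\<^sup>2) - (\<Sum>k=1..n. (cmod (c k))\<^sup>2))"
proof -
  have "(hdist (hyd_lincomb c {1..m} B) (hyd_lincomb c {1..n} B))\<^sup>2 = (\<Sum>k\<in>{1..m} - {1..n}. (cmod (c k))\<^sup>2)"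
    unfolding hdist_def using \<open>n \<le> m\<close>
    by (simp add: hyd_lincomb_diff) (intro hnorm_lincomb_power2 hyd_orthonormal_subset[OF orth]; auto)
  also have "\<dots> = (\<Sum>k=1..m. (cmod (c k))\<^sup>2) - (\<Sum>k=1..n. (cmod (c k))\<^sup>2)"
    using \<open>n \<le> m\<close> by (simp add: sum_diff)
  finally show ?thesis by (simp add: real_sqrt_unique hdist_def)
qed

lemma hyd_lincomb_partial_sums_Cauchy:
  assumes orth: "hyd_orthonormal {1..} B" and conv: "convergent (\<lambda>K. \<Sum>k=1..K. (cmod (c k))\<^sup>2)"
    and "e > 0"
  shows "\<exists>M. \<forall>m\<ge>M. \<forall>n\<ge>M. hdist (hyd_lincomb c {1..m} B) (hyd_lincomb c {1..n} B) < e"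
proof -
  define P where "P K = (\<Sum>k=1..K. (cmod (c k))\<^sup>2)" for K
  obtain M where M: "\<And>m n. m \<ge> M \<Longrightarrow> n \<ge> M \<Longrightarrow> dist (P m) (P n) < e\<^sup>2"
    using metric_CauchyD[OF convergent_Cauchy[OF conv], of "e\<^sup>2"] \<open>e > 0\<close> by (auto simp: P_def)
  have le: "hdist (hyd_lincomb c {1..m} B) (hyd_lincomb c {1..n} B) < e"
    if "m \<ge> M" "n \<ge> M" "n \<le> m" for m n
  proof -
    have "hdist (hyd_lincomb c {1..m} B) (hyd_lincomb c {1..n} B) = sqrt (P m - P n)"
      unfolding P_def by (rule hdist_lincomb_partial_sums[OF orth \<open>n \<le> m\<close>])
    also have "\<dots> < sqrt (e\<^sup>2)"
      using M[OF that(1,2)] by (intro real_sqrt_less_mono) (simp add: dist_real_def)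
    finally show ?thesis using \<open>e > 0\<close> by simp
  qed
  have "hdist (hyd_lincomb c {1..m} B) (hyd_lincomb c {1..n} B) < e" if "m \<ge> M" "n \<ge> M" for m n
    using le[OF that] le[OF that(2,1)] hdist_commute by (cases "n \<le> m") auto
  then show ?thesis by blast
qed

lemma hinner_eq_if_lincomb_tendsto:
  assumes orth: "hyd_orthonormal {1..} B" and u: "u \<in> hyd_space"
    and lim: "(\<lambda>K. hdist u (hyd_lincomb c {1..K} B)) \<longlonglongrightarrow> 0" and j: "j \<ge> 1"
  shows "hinner (B j) u = c j"
proof -
  have Bj: "B j \<in> hyd_space" using orth j by (simp add: hyd_orthonormal_in_space)
  have "cmod (hinner (B j) u - c j) \<le> hdist u (hyd_lincomb c {1..K} B)" if "K \<ge> j" for K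
  proof -
    have orth_K: "hyd_orthonormal {1..K} B" using orth by (rule hyd_orthonormal_subset) auto
    then have "hinner (B j) u - c j = hinner (B j) (\<lambda>i. u i - hyd_lincomb c {1..K} B i)"
      using j that Bj u by (simp add: hinner_diff_right hyd_lincomb_in_space hinner_orthonormal_lincomb)
    then show ?thesis
      using hinner_cauchy_schwarz[OF Bj hyd_space_diff[OF u hyd_lincomb_in_space[OF orth_K]]]
        hyd_orthonormal_hnorm[OF orth] j
      by (simp add: hdist_def)
  qed
  then have "cmod (hinner (B j) u - c j) \<le> 0"
    by (intro LIMSEQ_le_const[OF lim]) blast
  then show ?thesis by simp
qed

lemma hyd_onb_parseval:
  assumes onb: "hyd_onb B" and v: "v \<in> hyd_space"
  shows "(\<lambda>K. \<Sum>k=1..K. (cmod (hinner (B k) v))\<^sup>2) \<longlonglongrightarrow> (hnorm v)\<^sup>2"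
proof -
  define c where "c k = hinner (B k) v" for k
  define w where "w K = hyd_lincomb c {1..K} B" for K
  have orth: "hyd_orthonormal {1..} B"
    using onb by (rule hyd_onb_orthonormal) simp
  have w: "w K \<in> hyd_space" for K
    unfolding w_def by (rule hyd_lincomb_in_space, rule hyd_orthonormal_subset[OF orth]) auto
  have "incseq (\<lambda>K. \<Sum>k=1..K. (cmod (c k))\<^sup>2)"
    by (intro incseq_SucI sum_mono2) auto
  moreover have "(\<Sum>k=1..K. (cmod (c k))\<^sup>2) \<le> (hnorm v)\<^sup>2" for K
    unfolding c_def using v by (intro bessel_inequality hyd_orthonormal_subset[OF orth]) auto
  ultimately have "convergent (\<lambda>K. \<Sum>k=1..K. (cmod (c k))\<^sup>2)"
    by (metis convergent_def incseq_convergent)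
  then obtain u where u: "u \<in> hyd_space" and lim: "(\<lambda>K. hdist u (w K)) \<longlonglongrightarrow> 0"
    using hyd_space_complete[of w, OF w] hyd_lincomb_partial_sums_Cauchy[OF orth] by (metis w_def)
  have "hinner (B k) (\<lambda>i. v i - u i) = 0" if "k \<ge> 1" for k
    using hinner_diff_right[OF hyd_onb_in_space[OF onb that] v u]
      hinner_eq_if_lincomb_tendsto[OF orth u lim[unfolded w_def] that] by (simp add: c_def)
  then have "(\<lambda>i. v i - u i) = (\<lambda>_. 0)"
    using onb v u by (intro hyd_onb_complete hyd_space_diff)
  then have "u = v" by (simp add: fun_eq_iff)
  have "(\<lambda>K. hnorm (w K) - hnorm v) \<longlonglongrightarrow> 0"
    using abs_hnorm_diff_le_hdist[OF v w] \<open>u = v\<close>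
    by (intro Lim_null_comparison[OF _ lim]) (simp add: abs_minus_commute)
  then have "(\<lambda>K. (hnorm (w K))\<^sup>2) \<longlonglongrightarrow> (hnorm v)\<^sup>2"
    by (intro tendsto_power) (simp add: LIM_zero_iff)
  moreover have "(hnorm (w K))\<^sup>2 = (\<Sum>k=1..K. (cmod (c k))\<^sup>2)" for K
    unfolding w_def by (intro hnorm_lincomb_power2 hyd_orthonormal_subset[OF orth]) auto
  ultimately show ?thesis by (simp add: c_def)
qed

section \<open>The time evolution\<close>

definition hyd_phase :: "real \<Rightarrow> real \<Rightarrow> nat \<Rightarrow> complex" where
  "hyd_phase \<kappa> s n = exp (- \<i> * complex_of_real (s * hyd_eigval \<kappa> n))"

lemma hyd_evol_apply: "hyd_evol \<kappa> s \<psi> i = hyd_phase \<kappa> s (fst i) * \<psi> i"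
  by (cases i) (simp add: hyd_evol_def hyd_phase_def)

lemma norm_hyd_phase [simp]: "cmod (hyd_phase \<kappa> s n) = 1"
  using norm_exp_i_times[of "- (s * hyd_eigval \<kappa> n)"] by (simp add: hyd_phase_def)

lemma norm_hyd_evol_apply [simp]: "cmod (hyd_evol \<kappa> s \<psi> i) = cmod (\<psi> i)"
  by (simp add: hyd_evol_apply norm_mult)

lemma hyd_evol_in_space:
  assumes "\<psi> \<in> hyd_space"
  shows "hyd_evol \<kappa> s \<psi> \<in> hyd_space"
proof (rule hyd_spaceI)
  show "hyd_evol \<kappa> s \<psi> i = 0" if "i \<notin> hyd_labels" for i
    using assms that by (simp add: hyd_evol_apply hyd_space_vanishes)
  show "(\<lambda>i. (cmod (hyd_evol \<kappa> s \<psi> i))\<^sup>2) summable_on UNIV"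
    using hyd_space_summable[OF assms] by simp
qed

lemma hnorm_hyd_evol [simp]: "hnorm (hyd_evol \<kappa> s \<psi>) = hnorm \<psi>"
  by (simp add: hnorm_def)

lemma hyd_evol_add:
  "hyd_evol \<kappa> s (\<lambda>i. x i + y i) = (\<lambda>i. hyd_evol \<kappa> s x i + hyd_evol \<kappa> s y i)"
  by (simp add: hyd_evol_apply distrib_left fun_eq_iff)

lemma norm_exp_i_times_diff_le:
  "cmod (exp (\<i> * complex_of_real a) - exp (\<i> * complex_of_real b)) \<le> \<bar>a - b\<bar>"
proof -
  have "exp (\<i> * complex_of_real a) - exp (\<i> * complex_of_real b)
      = exp (\<i> * complex_of_real b) * (exp (\<i> * complex_of_real (a - b)) - 1)"
    by (simp add: algebra_simps flip: exp_add)
  then have "cmod (exp (\<i> * complex_of_real a) - exp (\<i> * complex_of_real b))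
      = cmod (exp (\<i> * complex_of_real (a - b)) - 1)"
    by (simp only: norm_mult norm_exp_i_times mult_1)
  also have "\<dots> = 2 * \<bar>sin ((a - b) / 2)\<bar>"
    by (rule dist_exp_i_1)
  also have "\<dots> \<le> \<bar>a - b\<bar>"
    using abs_sin_x_le_abs_x[of "(a - b) / 2"] by simp
  finally show ?thesis .
qed

lemma abs_hyd_eigval_le: "\<bar>hyd_eigval \<kappa> n\<bar> \<le> \<kappa>\<^sup>2 / 4"
proof (cases "n = 0")
  case False
  then have "1 \<le> (real n)\<^sup>2" by simp
  from divide_left_mono[OF this, of "\<kappa>\<^sup>2 / 4"] show ?thesis
    using False by (simp add: hyd_eigval_def abs_divide)
qed (simp add: hyd_eigval_def)

lemma norm_hyd_phase_diff_le:
  "cmod (hyd_phase \<kappa> s n - hyd_phase \<kappa> s' n) \<le> \<kappa>\<^sup>2 / 4 * \<bar>s - s'\<bar>"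
proof -
  have "cmod (hyd_phase \<kappa> s n - hyd_phase \<kappa> s' n) \<le> \<bar>s - s'\<bar> * \<bar>hyd_eigval \<kappa> n\<bar>"
    using norm_exp_i_times_diff_le[of "- (s * hyd_eigval \<kappa> n)" "- (s' * hyd_eigval \<kappa> n)"]
    by (simp add: hyd_phase_def abs_mult[symmetric] algebra_simps)
  also have "\<dots> \<le> \<kappa>\<^sup>2 / 4 * \<bar>s - s'\<bar>"
    using mult_left_mono[OF abs_hyd_eigval_le abs_ge_zero[of "s - s'"]] by (simp add: mult.commute)
  finally show ?thesis .
qed

lemma hnorm_hyd_evol_diff_le:
  assumes "\<psi> \<in> hyd_space"
  shows "hnorm (\<lambda>i. hyd_evol \<kappa> s \<psi> i - hyd_evol \<kappa> s' \<psi> i) \<le> \<kappa>\<^sup>2 / 4 * \<bar>s - s'\<bar> * hnorm \<psi>"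
proof -
  define C where "C = \<kappa>\<^sup>2 / 4 * \<bar>s - s'\<bar>"
  have "cmod (hyd_evol \<kappa> s \<psi> i - hyd_evol \<kappa> s' \<psi> i) \<le> C * cmod (\<psi> i)" for i
    using mult_right_mono[OF norm_hyd_phase_diff_le[of \<kappa> s "fst i" s'] norm_ge_zero[of "\<psi> i"]]
    by (simp add: C_def hyd_evol_apply norm_mult flip: left_diff_distrib)
  then have "(hnorm (\<lambda>i. hyd_evol \<kappa> s \<psi> i - hyd_evol \<kappa> s' \<psi> i))\<^sup>2
      \<le> infsum (\<lambda>i. C\<^sup>2 * (cmod (\<psi> i))\<^sup>2) UNIV"
    unfolding hnorm_power2 using assms
    by (intro infsum_mono hyd_space_summable hyd_space_diff hyd_evol_in_space summable_on_cmult_right)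
      (simp_all add: power_mono flip: power_mult_distrib)
  also have "\<dots> = (C * hnorm \<psi>)\<^sup>2"
    by (simp add: infsum_cmult_right' hnorm_power2 power_mult_distrib)
  finally show ?thesis
    unfolding C_def by (rule power2_le_imp_le) simp
qed

lemma lipschitz_hinner_hyd_evol:
  assumes "b \<in> hyd_space" "\<psi> \<in> hyd_space"
  shows "(hnorm b * (\<kappa>\<^sup>2 / 4 * hnorm \<psi>))-lipschitz_on A (\<lambda>s. hinner b (hyd_evol \<kappa> s \<psi>))"
proof (rule lipschitz_onI)
  fix s s' :: real
  have "dist (hinner b (hyd_evol \<kappa> s \<psi>)) (hinner b (hyd_evol \<kappa> s' \<psi>))
      = cmod (hinner b (\<lambda>i. hyd_evol \<kappa> s \<psi> i - hyd_evol \<kappa> s' \<psi> i))"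
    using assms by (simp add: dist_norm hinner_diff_right hyd_evol_in_space)
  also have "\<dots> \<le> hnorm b * hnorm (\<lambda>i. hyd_evol \<kappa> s \<psi> i - hyd_evol \<kappa> s' \<psi> i)"
    using assms by (intro hinner_cauchy_schwarz hyd_space_diff hyd_evol_in_space)
  also have "\<dots> \<le> hnorm b * (\<kappa>\<^sup>2 / 4 * hnorm \<psi>) * dist s s'"
    using mult_left_mono[OF hnorm_hyd_evol_diff_le[OF assms(2)] hnorm_nonneg[of b]]
    by (simp add: dist_real_def mult_ac)
  finally show "dist (hinner b (hyd_evol \<kappa> s \<psi>)) (hinner b (hyd_evol \<kappa> s' \<psi>))
      \<le> hnorm b * (\<kappa>\<^sup>2 / 4 * hnorm \<psi>) * dist s s'" .
qed simp

lemma integrable_norm_hinner_hyd_evol: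
  assumes "b \<in> hyd_space" "\<psi> \<in> hyd_space"
  shows "(\<lambda>s. (cmod (hinner b (hyd_evol \<kappa> s \<psi>)))\<^sup>2) integrable_on {0..t}"
  using lipschitz_on_continuous_on[OF lipschitz_hinner_hyd_evol[OF assms]]
  by (intro integrable_continuous_interval continuous_intros)

section \<open>Dephasing of finitely many frequencies\<close>

lemma sum_sum_mult_symmetric_le:
  fixes a :: "'a \<Rightarrow> real" and W :: "'a \<Rightarrow> 'a \<Rightarrow> real"
  assumes sym: "\<And>n m. W n m = W m n" and nonneg: "\<And>n m. W n m \<ge> 0"
  shows "(\<Sum>n\<in>S. \<Sum>m\<in>S. a n * a m * W n m) \<le> (\<Sum>n\<in>S. (a n)\<^sup>2 * (\<Sum>m\<in>S. W n m))"
proof -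
  have "a n * a m * W n m \<le> (a n)\<^sup>2 / 2 * W n m + (a m)\<^sup>2 / 2 * W m n" for n m
  proof -
    have "a n * a m \<le> (a n)\<^sup>2 / 2 + (a m)\<^sup>2 / 2"
      using sum_squares_ge_zero[of "a n - a m" 0] by (simp add: power2_eq_square algebra_simps)
    then have "a n * a m * W n m \<le> ((a n)\<^sup>2 / 2 + (a m)\<^sup>2 / 2) * W n m"
      using nonneg by (rule mult_right_mono)
    then show ?thesis by (simp add: sym[of m n] algebra_simps)
  qed
  then have "(\<Sum>n\<in>S. \<Sum>m\<in>S. a n * a m * W n m)
      \<le> (\<Sum>n\<in>S. \<Sum>m\<in>S. (a n)\<^sup>2 / 2 * W n m) + (\<Sum>n\<in>S. \<Sum>m\<in>S. (a m)\<^sup>2 / 2 * W m n)"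
    by (simp add: sum_mono flip: sum.distrib)
  also have "(\<Sum>n\<in>S. \<Sum>m\<in>S. (a m)\<^sup>2 / 2 * W m n) = (\<Sum>n\<in>S. \<Sum>m\<in>S. (a n)\<^sup>2 / 2 * W n m)"
    by (rule sum.swap)
  finally show ?thesis
    by (simp add: sum_distrib_left)
qed

lemma norm_integral_exp_i_times_le:
  assumes "t \<ge> 0" "\<omega> \<noteq> 0"
  shows "cmod (integral {0..t} (\<lambda>s. exp (\<i> * complex_of_real (s * \<omega>)))) \<le> 2 / \<bar>\<omega>\<bar>"
proof -
  have "integral {0..t} (\<lambda>s. exp (\<i> * complex_of_real (s * \<omega>)))
      = (exp (\<i> * complex_of_real \<omega> * complex_of_real t) - 1) / (\<i> * complex_of_real \<omega>)"
    using integral_exp[of t "\<i> * complex_of_real \<omega>"] assms by (simp add: mult_ac)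
  moreover have "cmod (exp (\<i> * complex_of_real \<omega> * complex_of_real t) - 1) \<le> 2"
    using norm_triangle_ineq4[of "exp (\<i> * complex_of_real (\<omega> * t))" 1] by (simp add: mult.assoc)
  ultimately show ?thesis
    using assms(2) by (simp add: norm_divide norm_mult divide_right_mono)
qed

lemma norm_sum_power2_eq_double_sum:
  fixes z f :: "'a \<Rightarrow> complex"
  shows "(cmod (\<Sum>n\<in>S. z n * f n))\<^sup>2 = Re (\<Sum>n\<in>S. \<Sum>m\<in>S. z n * cnj (z m) * (f n * cnj (f m)))"
proof -
  have "(cmod (\<Sum>n\<in>S. z n * f n))\<^sup>2 = Re ((\<Sum>n\<in>S. z n * f n) * cnj (\<Sum>n\<in>S. z n * f n))"
    by (simp only: flip: complex_norm_square) (simp only: Re_complex_of_real)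
  also have "(\<Sum>n\<in>S. z n * f n) * cnj (\<Sum>n\<in>S. z n * f n)
      = (\<Sum>n\<in>S. \<Sum>m\<in>S. (z n * f n) * (cnj (z m) * cnj (f m)))"
    by (simp only: cnj_sum complex_cnj_mult sum_product)
  finally show ?thesis by (simp only: mult_ac)
qed

lemma integral_norm_sum_exp_power2:
  fixes \<omega> :: "'a \<Rightarrow> real" and z :: "'a \<Rightarrow> complex"
  assumes "finite S"
  shows "integral {0..t} (\<lambda>s. (cmod (\<Sum>n\<in>S. z n * exp (\<i> * complex_of_real (s * \<omega> n))))\<^sup>2)
    = Re (\<Sum>n\<in>S. \<Sum>m\<in>S. z n * cnj (z m) *
            integral {0..t} (\<lambda>s. exp (\<i> * complex_of_real (s * (\<omega> n - \<omega> m)))))"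
proof (rule integral_unique)
  have exp_cnj_mult: "exp (\<i> * complex_of_real (s * \<omega> n)) * cnj (exp (\<i> * complex_of_real (s * \<omega> m)))
      = exp (\<i> * complex_of_real (s * (\<omega> n - \<omega> m)))" for s n m
    by (simp add: exp_cnj algebra_simps flip: exp_add)
  have "((\<lambda>s. \<Sum>n\<in>S. \<Sum>m\<in>S. z n * cnj (z m) * exp (\<i> * complex_of_real (s * (\<omega> n - \<omega> m))))
      has_integral (\<Sum>n\<in>S. \<Sum>m\<in>S. z n * cnj (z m) *
        integral {0..t} (\<lambda>s. exp (\<i> * complex_of_real (s * (\<omega> n - \<omega> m)))))) {0..t}"
    using assms by (intro has_integral_sum has_integral_mult_right integrable_integral
        integrable_continuous_interval continuous_intros)
  from has_integral_linear[OF this bounded_linear_Re]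
  show "((\<lambda>s. (cmod (\<Sum>n\<in>S. z n * exp (\<i> * complex_of_real (s * \<omega> n))))\<^sup>2) has_integral
      Re (\<Sum>n\<in>S. \<Sum>m\<in>S. z n * cnj (z m) *
        integral {0..t} (\<lambda>s. exp (\<i> * complex_of_real (s * (\<omega> n - \<omega> m)))))) {0..t}"
    by (simp only: o_def norm_sum_power2_eq_double_sum exp_cnj_mult)
qed

text \<open>Only the diagonal terms grow linearly in time; the off-diagonal time integrals stay
  bounded by the inverse frequency gaps.\<close>

lemma integral_norm_sum_exp_power2_le:
  fixes \<omega> :: "'a \<Rightarrow> real" and z :: "'a \<Rightarrow> complex"
  assumes S: "finite S" and inj: "inj_on \<omega> S" and t: "t \<ge> 0"
  shows "integral {0..t} (\<lambda>s. (cmod (\<Sum>n\<in>S. z n * exp (\<i> * complex_of_real (s * \<omega> n))))\<^sup>2)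
     \<le> (\<Sum>n\<in>S. (cmod (z n))\<^sup>2 * (t + (\<Sum>m\<in>S - {n}. 2 / \<bar>\<omega> n - \<omega> m\<bar>)))"
proof -
  define E where "E n m = integral {0..t} (\<lambda>s. exp (\<i> * complex_of_real (s * (\<omega> n - \<omega> m))))" for n m
  define W where "W n m = (if n = m then t else 2 / \<bar>\<omega> n - \<omega> m\<bar>)" for n m
  have E_le: "cmod (E n m) \<le> W n m" if "n \<in> S" "m \<in> S" for n m
  proof (cases "n = m")
    case False
    then have "\<omega> n - \<omega> m \<noteq> 0" using inj that by (auto dest: inj_onD)
    then show ?thesis
      using False norm_integral_exp_i_times_le[OF t] by (simp only: E_def W_def if_False)
  qed (use t in \<open>simp add: E_def W_def\<close>)
  have "integral {0..t} (\<lambda>s. (cmod (\<Sum>n\<in>S. z n * exp (\<i> * complex_of_real (s * \<omega> n))))\<^sup>2)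
      = Re (\<Sum>n\<in>S. \<Sum>m\<in>S. z n * cnj (z m) * E n m)"
    unfolding E_def by (rule integral_norm_sum_exp_power2[OF S])
  also have "\<dots> \<le> (\<Sum>n\<in>S. \<Sum>m\<in>S. cmod (z n * cnj (z m) * E n m))"
    by (rule order_trans[OF complex_Re_le_cmod order_trans[OF norm_sum sum_mono[OF norm_sum]]])
  also have "\<dots> \<le> (\<Sum>n\<in>S. \<Sum>m\<in>S. cmod (z n) * cmod (z m) * W n m)"
    using E_le by (intro sum_mono) (simp add: norm_mult mult_left_mono)
  also have "\<dots> \<le> (\<Sum>n\<in>S. (cmod (z n))\<^sup>2 * (\<Sum>m\<in>S. W n m))"
    using t by (intro sum_sum_mult_symmetric_le) (auto simp: W_def abs_minus_commute)
  also have "\<dots> = (\<Sum>n\<in>S. (cmod (z n))\<^sup>2 * (t + (\<Sum>m\<in>S - {n}. 2 / \<bar>\<omega> n - \<omega> m\<bar>)))"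
    using S by (intro sum.cong refl) (auto simp: sum.remove W_def split: if_splits intro!: sum.cong)
  finally show ?thesis .
qed

lemma hyd_eigval_diff:
  assumes "n > 0" "m > 0"
  shows "hyd_eigval \<kappa> n - hyd_eigval \<kappa> m
    = \<kappa>\<^sup>2 / 4 * ((real n - real m) * (real n + real m)) / ((real n)\<^sup>2 * (real m)\<^sup>2)"
  using assms by (simp add: hyd_eigval_def field_simps power2_eq_square)

lemma inj_on_hyd_eigval:
  assumes "\<kappa> \<noteq> 0"
  shows "inj_on (hyd_eigval \<kappa>) {1..}"
proof (rule inj_onI)
  fix n m :: nat assume "n \<in> {1..}" "m \<in> {1..}" "hyd_eigval \<kappa> n = hyd_eigval \<kappa> m"
  then have "(real n - real m) * (real n + real m) = 0"
    using hyd_eigval_diff[of n m \<kappa>] assms by simp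
  with \<open>n \<in> {1..}\<close> show "n = m" by simp
qed

lemma hyd_eigval_gap:
  assumes "\<kappa> > 0" "n \<in> {L+1..2*L}" "m \<in> {L+1..2*L}" "n \<noteq> m"
  shows "2 / \<bar>hyd_eigval \<kappa> n - hyd_eigval \<kappa> m\<bar> \<le> 64 * (real L)^3 / (\<kappa>\<^sup>2 * \<bar>real n - real m\<bar>)"
proof -
  define x y where "x = real n" and "y = real m"
  have x: "real L + 1 \<le> x" "x \<le> 2 * real L" and y: "real L + 1 \<le> y" "y \<le> 2 * real L"
    using assms(2,3) by (auto simp: x_def y_def)
  have pos1: "\<kappa>\<^sup>2 * \<bar>x - y\<bar> > 0" and pos2: "x + y > 0"
    using assms x y by (auto simp: x_def y_def)
  then have pos: "\<kappa>\<^sup>2 * \<bar>x - y\<bar> * (x + y) > 0" by simp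
  have "x\<^sup>2 * y\<^sup>2 \<le> (2 * real L)\<^sup>2 * (2 * real L)\<^sup>2"
    using x y by (intro mult_mono power_mono) auto
  also have "\<dots> \<le> 8 * (real L)^3 * (x + y)"
    using x y by (simp add: power2_eq_square power3_eq_cube mult_left_mono)
  finally have xy: "x\<^sup>2 * y\<^sup>2 \<le> 8 * (real L)^3 * (x + y)" .
  have "\<bar>hyd_eigval \<kappa> n - hyd_eigval \<kappa> m\<bar> = \<kappa>\<^sup>2 * \<bar>x - y\<bar> * (x + y) / (4 * (x\<^sup>2 * y\<^sup>2))"
    using hyd_eigval_diff[of n m \<kappa>] assms(2,3) x y
    by (simp add: x_def y_def abs_mult abs_divide mult_ac)
  then have "2 / \<bar>hyd_eigval \<kappa> n - hyd_eigval \<kappa> m\<bar> = 8 * (x\<^sup>2 * y\<^sup>2) / (\<kappa>\<^sup>2 * \<bar>x - y\<bar> * (x + y))"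
    using x y by simp
  also have "\<dots> \<le> 64 * (real L)^3 * (x + y) / (\<kappa>\<^sup>2 * \<bar>x - y\<bar> * (x + y))"
    using xy pos by (intro divide_right_mono) (auto simp: mult_ac)
  also have "\<dots> = 64 * (real L)^3 / (\<kappa>\<^sup>2 * \<bar>x - y\<bar>)"
    using pos2 by (intro mult_divide_mult_cancel_right) simp
  finally show ?thesis by (simp add: x_def y_def)
qed

lemma sum_inverse_dist_le_harm:
  assumes "n \<in> {L+1..2*L}"
  shows "(\<Sum>m\<in>{L+1..2*L} - {n}. 1 / \<bar>real n - real m\<bar>) \<le> 2 * harm L"
proof -
  have below: "(\<Sum>m\<in>{m\<in>{L+1..2*L}. m < n}. 1 / \<bar>real n - real m\<bar>) \<le> harm L"
  proof -
    have "(\<Sum>m\<in>{m\<in>{L+1..2*L}. m < n}. 1 / \<bar>real n - real m\<bar>)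
        = (\<Sum>d\<in>(\<lambda>m. n - m) ` {m\<in>{L+1..2*L}. m < n}. inverse (real d))"
      by (subst sum.reindex) (auto simp: inj_on_def of_nat_diff divide_inverse)
    also have "\<dots> \<le> harm L"
      unfolding harm_def using assms by (intro sum_mono2) auto
    finally show ?thesis .
  qed
  have above: "(\<Sum>m\<in>{m\<in>{L+1..2*L}. n < m}. 1 / \<bar>real n - real m\<bar>) \<le> harm L"
  proof -
    have "(\<Sum>m\<in>{m\<in>{L+1..2*L}. n < m}. 1 / \<bar>real n - real m\<bar>)
        = (\<Sum>d\<in>(\<lambda>m. m - n) ` {m\<in>{L+1..2*L}. n < m}. inverse (real d))"
      by (subst sum.reindex) (auto simp: inj_on_def of_nat_diff divide_inverse)
    also have "\<dots> \<le> harm L"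
      unfolding harm_def using assms by (intro sum_mono2) auto
    finally show ?thesis .
  qed
  have "{L+1..2*L} - {n} = {m\<in>{L+1..2*L}. m < n} \<union> {m\<in>{L+1..2*L}. n < m}" by auto
  then have "(\<Sum>m\<in>{L+1..2*L} - {n}. 1 / \<bar>real n - real m\<bar>)
      = (\<Sum>m\<in>{m\<in>{L+1..2*L}. m < n}. 1 / \<bar>real n - real m\<bar>)
        + (\<Sum>m\<in>{m\<in>{L+1..2*L}. n < m}. 1 / \<bar>real n - real m\<bar>)"
    by (simp add: sum.union_disjoint disjoint_iff)
  with below above show ?thesis by linarith
qed

lemma integral_norm_sum_hyd_phase_power2_le:
  assumes "\<kappa> > 0" "t \<ge> 0"
  shows "integral {0..t} (\<lambda>s. (cmod (\<Sum>n=L+1..2*L. z n * hyd_phase \<kappa> s n))\<^sup>2)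
    \<le> (\<Sum>n=L+1..2*L. (cmod (z n))\<^sup>2) * (t + 128 * (real L)^3 * harm L / \<kappa>\<^sup>2)"
proof -
  define \<omega> where "\<omega> n = - hyd_eigval \<kappa> n" for n
  have phase: "hyd_phase \<kappa> s n = exp (\<i> * complex_of_real (s * \<omega> n))" for s n
    by (simp add: hyd_phase_def \<omega>_def)
  have "inj_on (hyd_eigval \<kappa>) {L+1..2*L}"
    using assms(1) by (intro inj_on_subset[OF inj_on_hyd_eigval]) auto
  then have "inj_on \<omega> {L+1..2*L}" by (simp add: \<omega>_def inj_on_def)
  then have "integral {0..t} (\<lambda>s. (cmod (\<Sum>n=L+1..2*L. z n * hyd_phase \<kappa> s n))\<^sup>2)
    \<le> (\<Sum>n=L+1..2*L. (cmod (z n))\<^sup>2 * (t + (\<Sum>m\<in>{L+1..2*L} - {n}. 2 / \<bar>\<omega> n - \<omega> m\<bar>)))"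
    unfolding phase using assms(2) by (intro integral_norm_sum_exp_power2_le) auto
  also have "\<dots> \<le> (\<Sum>n=L+1..2*L. (cmod (z n))\<^sup>2 * (t + 128 * (real L)^3 * harm L / \<kappa>\<^sup>2))"
  proof (intro sum_mono mult_left_mono add_left_mono)
    fix n assume n: "n \<in> {L+1..2*L}"
    have "(\<Sum>m\<in>{L+1..2*L} - {n}. 2 / \<bar>\<omega> n - \<omega> m\<bar>)
        \<le> (\<Sum>m\<in>{L+1..2*L} - {n}. 64 * (real L)^3 / \<kappa>\<^sup>2 * (1 / \<bar>real n - real m\<bar>))"
      using hyd_eigval_gap[OF assms(1) n] by (intro sum_mono) (auto simp: \<omega>_def abs_minus_commute)
    also have "\<dots> \<le> 64 * (real L)^3 / \<kappa>\<^sup>2 * (2 * harm L)"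
      unfolding sum_distrib_left[symmetric] using sum_inverse_dist_le_harm[OF n]
      by (intro mult_left_mono) auto
    finally show "(\<Sum>m\<in>{L+1..2*L} - {n}. 2 / \<bar>\<omega> n - \<omega> m\<bar>) \<le> 128 * (real L)^3 * harm L / \<kappa>\<^sup>2"
      by simp
  qed simp
  finally show ?thesis by (simp add: sum_distrib_right)
qed

section \<open>Wave packets and time-averaged populations\<close>

definition hyd_packet :: "complex \<Rightarrow> nat \<Rightarrow> hvec" where
  "hyd_packet a L = (\<lambda>(n, l, m). if n \<in> {L+1..2*L} \<and> l = 0 \<and> m = 0 then a else 0)"

lemma has_sum_s_states:
  fixes f :: "hlabel \<Rightarrow> 'a::{comm_monoid_add, topological_space}"
  assumes "finite N" and "\<And>n l m. f (n, l, m) \<noteq> 0 \<Longrightarrow> n \<in> N \<and> l = 0 \<and> m = 0"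
  shows "(f has_sum (\<Sum>n\<in>N. f (n, 0, 0))) UNIV"
proof (rule has_sum_finite_neutralI)
  show "finite ((\<lambda>n. (n, 0, 0)) ` N)" using assms(1) by simp
  show "f i = 0" if "i \<in> UNIV - (\<lambda>n. (n, 0, 0)) ` N" for i
    using that assms(2) by (cases i) (auto simp: image_iff)
  show "(\<Sum>n\<in>N. f (n, 0, 0)) = sum f ((\<lambda>n. (n, 0, 0)) ` N)"
    by (subst sum.reindex) (auto simp: inj_on_def)
qed auto

lemma sum_s_states_le_hnorm_power2:
  assumes "b \<in> hyd_space" "finite N"
  shows "(\<Sum>n\<in>N. (cmod (b (n, 0, 0)))\<^sup>2) \<le> (hnorm b)\<^sup>2"
proof -
  have "(\<Sum>n\<in>N. (cmod (b (n, 0, 0)))\<^sup>2) = (\<Sum>i\<in>(\<lambda>n. (n, 0, 0)) ` N. (cmod (b i))\<^sup>2)"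
    by (subst sum.reindex) (auto simp: inj_on_def)
  also have "\<dots> \<le> (hnorm b)\<^sup>2"
    using assms by (intro sum_power2_le_hnorm_power2) auto
  finally show ?thesis .
qed

lemma hyd_packet_nonzero: "hyd_packet a L (n, l, m) \<noteq> 0 \<Longrightarrow> n \<in> {L+1..2*L} \<and> l = 0 \<and> m = 0"
  by (simp add: hyd_packet_def split: if_splits)

lemma hyd_packet_s_state [simp]: "n \<in> {L+1..2*L} \<Longrightarrow> hyd_packet a L (n, 0, 0) = a"
  by (simp add: hyd_packet_def)

lemma has_sum_norm_hyd_packet_power2:
  "((\<lambda>i. (cmod (hyd_packet a L i))\<^sup>2) has_sum ((cmod a)\<^sup>2 * real L)) UNIV"
proof -
  have "((\<lambda>i. (cmod (hyd_packet a L i))\<^sup>2) has_sum (\<Sum>n=L+1..2*L. (cmod (hyd_packet a L (n, 0, 0)))\<^sup>2)) UNIV"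
    by (rule has_sum_s_states) (auto dest: hyd_packet_nonzero)
  then show ?thesis by (simp add: mult.commute)
qed

lemma hyd_packet_in_space: "hyd_packet a L \<in> hyd_space"
proof (rule hyd_spaceI)
  show "hyd_packet a L i = 0" if "i \<notin> hyd_labels" for i
    using that hyd_packet_nonzero by (cases i) (fastforce simp: hyd_labels_def)
  show "(\<lambda>i. (cmod (hyd_packet a L i))\<^sup>2) summable_on UNIV"
    using has_sum_norm_hyd_packet_power2 by (rule has_sum_imp_summable)
qed

lemma hnorm_hyd_packet_power2: "(hnorm (hyd_packet a L))\<^sup>2 = (cmod a)\<^sup>2 * real L"
  unfolding hnorm_power2 using has_sum_norm_hyd_packet_power2 by (rule infsumI)

lemma hnorm_hyd_packet: "hnorm (hyd_packet a L) = cmod a * sqrt (real L)"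
  by (rule power2_eq_imp_eq) (simp_all add: hnorm_hyd_packet_power2 power_mult_distrib)

lemma hinner_hyd_packet_eq_0:
  assumes "\<And>n l m. L\<^sub>0 < n \<Longrightarrow> \<phi> (n, l, m) = 0" and "L\<^sub>0 \<le> L"
  shows "hinner \<phi> (hyd_packet a L) = 0"
proof -
  have "cnj (\<phi> (n, l, m)) * hyd_packet a L (n, l, m) = 0" for n l m
    using assms hyd_packet_nonzero[of a L n l m] by force
  then have "(\<lambda>i. cnj (\<phi> i) * hyd_packet a L i) = (\<lambda>_. 0)" by (auto simp: fun_eq_iff)
  then show ?thesis unfolding hinner_def by simp
qed

lemma hinner_hyd_evol_packet:
  "hinner b (hyd_evol \<kappa> s (hyd_packet a L))
    = (\<Sum>n=L+1..2*L. (cnj (b (n, 0, 0)) * a) * hyd_phase \<kappa> s n)"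
proof -
  have "((\<lambda>i. cnj (b i) * hyd_evol \<kappa> s (hyd_packet a L) i) has_sum
      (\<Sum>n=L+1..2*L. cnj (b (n, 0, 0)) * hyd_evol \<kappa> s (hyd_packet a L) (n, 0, 0))) UNIV"
    by (rule has_sum_s_states) (auto simp: hyd_evol_apply dest: hyd_packet_nonzero)
  then show ?thesis
    unfolding hinner_def by (simp add: infsumI hyd_evol_apply mult_ac)
qed

lemma hyd_W_nonneg: "t \<ge> 0 \<Longrightarrow> hyd_W \<kappa> b \<psi> t \<ge> 0"
  unfolding hyd_W_def
  by (cases "(\<lambda>s. (cmod (hinner b (hyd_evol \<kappa> s \<psi>)))\<^sup>2) integrable_on {0..t}")
    (simp_all add: integral_nonneg not_integrable_integral)

lemma sum_hyd_W_eq: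
  assumes "finite K" "\<And>k. k \<in> K \<Longrightarrow> B k \<in> hyd_space" "\<psi> \<in> hyd_space"
  shows "(\<Sum>k\<in>K. hyd_W \<kappa> (B k) \<psi> t)
    = integral {0..t} (\<lambda>s. \<Sum>k\<in>K. (cmod (hinner (B k) (hyd_evol \<kappa> s \<psi>)))\<^sup>2) / t"
proof -
  have "integral {0..t} (\<lambda>s. \<Sum>k\<in>K. (cmod (hinner (B k) (hyd_evol \<kappa> s \<psi>)))\<^sup>2)
      = (\<Sum>k\<in>K. integral {0..t} (\<lambda>s. (cmod (hinner (B k) (hyd_evol \<kappa> s \<psi>)))\<^sup>2))"
    using assms by (intro integral_sum integrable_norm_hinner_hyd_evol) auto
  then show ?thesis by (simp add: hyd_W_def sum_divide_distrib)
qed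

lemma sum_hyd_W_tendsto:
  assumes onb: "hyd_onb B" and \<psi>: "\<psi> \<in> hyd_space" and t: "t > 0"
  shows "(\<lambda>K. \<Sum>k=1..K. hyd_W \<kappa> (B k) \<psi> t) \<longlonglongrightarrow> (hnorm \<psi>)\<^sup>2"
proof -
  define f where "f K s = (\<Sum>k=1..K. (cmod (hinner (B k) (hyd_evol \<kappa> s \<psi>)))\<^sup>2)" for K s
  have int: "f K integrable_on {0..t}" for K
    unfolding f_def using onb \<psi>
    by (intro integrable_sum integrable_norm_hinner_hyd_evol) (auto simp: hyd_onb_in_space)
  have f_le: "f K s \<le> (hnorm \<psi>)\<^sup>2" for K s
    unfolding f_def using bessel_inequality[OF hyd_onb_orthonormal[OF onb] _ hyd_evol_in_space[OF \<psi>]]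
    by auto
  have "(\<lambda>K. integral {0..t} (f K)) \<longlonglongrightarrow> integral {0..t} (\<lambda>s. (hnorm \<psi>)\<^sup>2)"
  proof (rule monotone_convergence_increasing[THEN conjunct2])
    show "f K s \<le> f (Suc K) s" for K s
      unfolding f_def by (intro sum_mono2) auto
    show "(\<lambda>K. f K s) \<longlonglongrightarrow> (hnorm \<psi>)\<^sup>2" for s
      unfolding f_def using hyd_onb_parseval[OF onb hyd_evol_in_space[OF \<psi>]] by simp
    have "norm (integral {0..t} (f K)) \<le> t * (hnorm \<psi>)\<^sup>2" for K
    proof -
      have "0 \<le> integral {0..t} (f K)"
        using int by (intro integral_nonneg) (auto simp: f_def intro: sum_nonneg)
      moreover have "integral {0..t} (f K) \<le> integral {0..t} (\<lambda>s. (hnorm \<psi>)\<^sup>2)"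
        using int f_le by (intro integral_le) auto
      ultimately show ?thesis using t by simp
    qed
    then show "bounded (range (\<lambda>K. integral {0..t} (f K)))"
      by (intro boundedI) blast
  qed (rule int)
  then have "(\<lambda>K. integral {0..t} (f K) / t) \<longlonglongrightarrow> (hnorm \<psi>)\<^sup>2"
    using t by (auto intro: tendsto_eq_intros)
  moreover have "(\<Sum>k=1..K. hyd_W \<kappa> (B k) \<psi> t) = integral {0..t} (f K) / t" for K
    unfolding f_def using onb \<psi> by (intro sum_hyd_W_eq) (auto simp: hyd_onb_in_space)
  ultimately show ?thesis by simp
qed

lemma sum_hyd_W_packet_le:
  assumes "\<kappa> > 0" "t > 0" "hyd_onb B"
  shows "(\<Sum>k=1..N. hyd_W \<kappa> (B k) (hyd_packet a L) t)
    \<le> real N * (cmod a)\<^sup>2 * (1 + 128 * (real L)^3 * harm L / (t * \<kappa>\<^sup>2))"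
proof -
  define C where "C = 128 * (real L)^3 * harm L / \<kappa>\<^sup>2"
  have C: "C \<ge> 0" unfolding C_def by (simp add: harm_nonneg)
  have "hyd_W \<kappa> (B k) (hyd_packet a L) t \<le> (cmod a)\<^sup>2 * (1 + C / t)" if "k \<in> {1..N}" for k
  proof -
    have Bk: "B k \<in> hyd_space" using assms(3) that by (intro hyd_onb_in_space) auto
    have "(\<Sum>n=L+1..2*L. (cmod (cnj (B k (n, 0, 0)) * a))\<^sup>2)
        = (cmod a)\<^sup>2 * (\<Sum>n=L+1..2*L. (cmod (B k (n, 0, 0)))\<^sup>2)"
      by (simp add: norm_mult power_mult_distrib sum_distrib_left mult_ac)
    also have "\<dots> \<le> (cmod a)\<^sup>2"
      using sum_s_states_le_hnorm_power2[OF Bk] hyd_onb_hnorm[OF assms(3)] that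
      by (intro mult_left_le) auto
    finally have coeffs: "(\<Sum>n=L+1..2*L. (cmod (cnj (B k (n, 0, 0)) * a))\<^sup>2) \<le> (cmod a)\<^sup>2" .
    have "hyd_W \<kappa> (B k) (hyd_packet a L) t
        \<le> (\<Sum>n=L+1..2*L. (cmod (cnj (B k (n, 0, 0)) * a))\<^sup>2) * (t + C) / t"
      unfolding hyd_W_def hinner_hyd_evol_packet C_def
      using integral_norm_sum_hyd_phase_power2_le[OF assms(1) less_imp_le[OF assms(2)]] assms(2)
      by (simp add: divide_right_mono)
    also have "\<dots> \<le> (cmod a)\<^sup>2 * (t + C) / t"
      using coeffs C assms(2) by (intro divide_right_mono mult_right_mono) auto
    finally show ?thesis using assms(2) by (simp add: field_simps)
  qed
  then have "(\<Sum>k=1..N. hyd_W \<kappa> (B k) (hyd_packet a L) t) \<le> (\<Sum>k=1..N. (cmod a)\<^sup>2 * (1 + C / t))"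
    by (rule sum_mono)
  then show ?thesis by (simp add: C_def mult_ac)
qed

lemma L2_set_hinner_add_le:
  assumes "hyd_orthonormal K B" "finite K" "x \<in> hyd_space" "y \<in> hyd_space"
  shows "L2_set (\<lambda>k. cmod (hinner (B k) (\<lambda>i. x i + y i))) K
    \<le> hnorm x + L2_set (\<lambda>k. cmod (hinner (B k) y)) K"
proof -
  have "L2_set (\<lambda>k. cmod (hinner (B k) (\<lambda>i. x i + y i))) K
      \<le> L2_set (\<lambda>k. cmod (hinner (B k) x) + cmod (hinner (B k) y)) K"
    using assms
    by (intro L2_set_mono) (simp_all add: hinner_add_right hyd_orthonormal_in_space norm_triangle_ineq)
  also have "\<dots> \<le> L2_set (\<lambda>k. cmod (hinner (B k) x)) K + L2_set (\<lambda>k. cmod (hinner (B k) y)) K"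
    by (rule L2_set_triangle_ineq)
  also have "L2_set (\<lambda>k. cmod (hinner (B k) x)) K \<le> hnorm x"
    using bessel_inequality[OF assms(1-3)] unfolding L2_set_def by (simp add: real_le_lsqrt)
  finally show ?thesis by simp
qed

lemma add_power2_le:
  fixes A r \<epsilon> :: real
  assumes "\<epsilon> > 0"
  shows "(A + r)\<^sup>2 \<le> A\<^sup>2 + \<epsilon> + (1 + A\<^sup>2 / \<epsilon>) * r\<^sup>2"
proof -
  have "0 \<le> (\<epsilon> - A * r)\<^sup>2 / \<epsilon>" using assms by simp
  also have "\<dots> = \<epsilon> - 2 * A * r + A\<^sup>2 * r\<^sup>2 / \<epsilon>"
    using assms by (simp add: power2_eq_square field_simps)
  finally show ?thesis by (simp add: power2_sum algebra_simps)
qed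

lemma sum_norm_hinner_add_power2_le:
  assumes orth: "hyd_orthonormal K B" "finite K" and x: "x \<in> hyd_space" and y: "y \<in> hyd_space"
    and A: "hnorm x \<le> A" and \<epsilon>: "\<epsilon> > 0"
  shows "(\<Sum>k\<in>K. (cmod (hinner (B k) (\<lambda>i. x i + y i)))\<^sup>2)
    \<le> A\<^sup>2 + \<epsilon> + (1 + A\<^sup>2 / \<epsilon>) * (\<Sum>k\<in>K. (cmod (hinner (B k) y))\<^sup>2)"
proof -
  have L2_power2: "(L2_set f K)\<^sup>2 = (\<Sum>k\<in>K. (f k)\<^sup>2)" for f :: "nat \<Rightarrow> real"
    unfolding L2_set_def by (simp add: sum_nonneg)
  have "L2_set (\<lambda>k. cmod (hinner (B k) (\<lambda>i. x i + y i))) K \<le> A + L2_set (\<lambda>k. cmod (hinner (B k) y)) K"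
    using L2_set_hinner_add_le[OF orth x y] A by linarith
  then have "(L2_set (\<lambda>k. cmod (hinner (B k) (\<lambda>i. x i + y i))) K)\<^sup>2
      \<le> (A + L2_set (\<lambda>k. cmod (hinner (B k) y)) K)\<^sup>2"
    by (rule power_mono) simp
  also have "\<dots> \<le> A\<^sup>2 + \<epsilon> + (1 + A\<^sup>2 / \<epsilon>) * (L2_set (\<lambda>k. cmod (hinner (B k) y)) K)\<^sup>2"
    using \<epsilon> by (rule add_power2_le)
  finally show ?thesis unfolding L2_power2 .
qed

lemma sum_hyd_W_add_le:
  assumes onb: "hyd_onb B" and x: "x \<in> hyd_space" and y: "y \<in> hyd_space"
    and A: "hnorm x \<le> A" and \<epsilon>: "\<epsilon> > 0" and t: "t > 0"
  shows "(\<Sum>k=1..N. hyd_W \<kappa> (B k) (\<lambda>i. x i + y i) t)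
    \<le> A\<^sup>2 + \<epsilon> + (1 + A\<^sup>2 / \<epsilon>) * (\<Sum>k=1..N. hyd_W \<kappa> (B k) y t)"
proof -
  define f where "f z s = (\<Sum>k=1..N. (cmod (hinner (B k) (hyd_evol \<kappa> s z)))\<^sup>2)" for z s
  define C D where "C = A\<^sup>2 + \<epsilon>" and "D = 1 + A\<^sup>2 / \<epsilon>"
  have B: "B k \<in> hyd_space" if "k \<in> {1..N}" for k
    using onb that by (intro hyd_onb_in_space) auto
  have orth: "hyd_orthonormal {1..N} B"
    using onb by (rule hyd_onb_orthonormal) auto
  have int: "f z integrable_on {0..t}" if "z \<in> hyd_space" for z
    unfolding f_def using B that by (intro integrable_sum integrable_norm_hinner_hyd_evol) auto
  have "f (\<lambda>i. x i + y i) s \<le> C + D * f y s" for s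
    using sum_norm_hinner_add_power2_le[OF orth _ hyd_evol_in_space[OF x] hyd_evol_in_space[OF y] _ \<epsilon>] A
    by (simp add: f_def C_def D_def hyd_evol_add)
  then have "integral {0..t} (f (\<lambda>i. x i + y i)) \<le> integral {0..t} (\<lambda>s. C + D * f y s)"
    using int x y by (intro integral_le integrable_add integrable_on_mult_right) (auto intro: hyd_space_add)
  also have "\<dots> = t * C + D * integral {0..t} (f y)"
  proof (rule integral_unique)
    have "((\<lambda>s. C) has_integral t * C) {0..t}"
      using has_integral_const_real[of C 0 t] t by simp
    then show "((\<lambda>s. C + D * f y s) has_integral t * C + D * integral {0..t} (f y)) {0..t}"
      using int[OF y] by (intro has_integral_add has_integral_mult_right integrable_integral)
  qed
  finally have "integral {0..t} (f (\<lambda>i. x i + y i)) / t \<le> (t * C + D * integral {0..t} (f y)) / t"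
    by (rule divide_right_mono) (use t in simp)
  moreover have "(\<Sum>k=1..N. hyd_W \<kappa> (B k) z t) = integral {0..t} (f z) / t" if "z \<in> hyd_space" for z
    unfolding f_def using B that by (intro sum_hyd_W_eq) auto
  ultimately show ?thesis
    using x y t by (simp add: hyd_space_add add_divide_distrib C_def D_def)
qed

lemma weighted_suminf_ge_tail:
  fixes W :: "nat \<Rightarrow> real"
  assumes nonneg: "\<And>k. W k \<ge> 0" and p: "p \<ge> 0" and lim: "(\<lambda>K. \<Sum>k=1..K. W k) \<longlonglongrightarrow> S"
  shows "ereal (real N powr p * (S - (\<Sum>k=1..N. W k)))
    \<le> (\<Sum>k. if k = 0 then 0 else ereal (real k powr p * W k))"
proof (rule LIMSEQ_le_const2)
  define T where "T k = (if k = 0 then 0 else ereal (real k powr p * W k))" for k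
  show "(\<lambda>K. ereal (real N powr p * ((\<Sum>k=1..K. W k) - (\<Sum>k=1..N. W k))))
      \<longlonglongrightarrow> ereal (real N powr p * (S - (\<Sum>k=1..N. W k)))"
    using lim by (intro tendsto_intros)
  have "ereal (real N powr p * ((\<Sum>k=1..K. W k) - (\<Sum>k=1..N. W k))) \<le> suminf T" if "K \<ge> N" for K
  proof -
    have "{1..K} - {1..N} = {N+1..K}" using that by auto
    then have "(\<Sum>k=1..K. W k) - (\<Sum>k=1..N. W k) = (\<Sum>k=N+1..K. W k)"
      using sum_diff[of "{1..K}" "{1..N}" W] that by simp
    then have "real N powr p * ((\<Sum>k=1..K. W k) - (\<Sum>k=1..N. W k)) = (\<Sum>k=N+1..K. real N powr p * W k)"
      by (simp add: sum_distrib_left)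
    also have "\<dots> \<le> (\<Sum>k=N+1..K. real k powr p * W k)"
      using p nonneg by (intro sum_mono mult_right_mono powr_mono2) auto
    finally have "ereal (real N powr p * ((\<Sum>k=1..K. W k) - (\<Sum>k=1..N. W k))) \<le> (\<Sum>k=N+1..K. T k)"
      by (simp add: T_def sum_ereal)
    also have "\<dots> \<le> (\<Sum>k<Suc K. T k)"
      by (intro sum_mono2) (auto simp: T_def nonneg)
    also have "\<dots> \<le> suminf T"
      by (intro suminf_upper) (simp add: T_def nonneg)
    finally show ?thesis .
  qed
  then show "\<exists>M. \<forall>K\<ge>M. ereal (real N powr p * ((\<Sum>k=1..K. W k) - (\<Sum>k=1..N. W k)))
      \<le> (\<Sum>k. if k = 0 then 0 else ereal (real k powr p * W k))"
    unfolding T_def by blast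
qed

lemma hyd_moment_sum_ge_tail:
  assumes onb: "hyd_onb B" and \<psi>: "\<psi> \<in> hyd_space" and t: "t > 0" and p: "p \<ge> 0"
  shows "ereal (real N powr p * ((hnorm \<psi>)\<^sup>2 - (\<Sum>k=1..N. hyd_W \<kappa> (B k) \<psi> t)))
    \<le> hyd_moment_sum \<kappa> p B \<psi> t"
  unfolding hyd_moment_sum_def using t
  by (intro weighted_suminf_ge_tail hyd_W_nonneg p sum_hyd_W_tendsto onb \<psi>) simp_all

lemma sum_hyd_W_near_packet_le:
  assumes \<kappa>: "\<kappa> > 0" and onb: "hyd_onb B" and \<psi>: "\<psi> \<in> hyd_space" and t: "t > 0"
    and N: "N \<ge> 1" and a: "a \<noteq> 0"
    and close: "hnorm (\<lambda>i. \<psi> i - hyd_packet a L i) \<le> A"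
    and dephased: "128 * (real L)^3 * harm L \<le> t * \<kappa>\<^sup>2"
    and few_levels: "32 * real N * (1 + 8 * A\<^sup>2 / ((cmod a)\<^sup>2 * real L)) \<le> real L"
  shows "(\<Sum>k=1..N. hyd_W \<kappa> (B k) \<psi> t) \<le> A\<^sup>2 + 3 / 16 * ((cmod a)\<^sup>2 * real L)"
proof -
  define c where "c = (cmod a)\<^sup>2 * real L"
  define D where "D = 1 + 8 * A\<^sup>2 / c"
  have D: "D \<ge> 1" unfolding D_def c_def by simp
  have "32 * real N \<le> real L"
    using few_levels mult_left_mono[OF D, of "32 * real N"] unfolding D_def c_def by simp
  then have c: "c > 0" using N a by (simp add: c_def)
  define x where "x = (\<lambda>i. \<psi> i - hyd_packet a L i)"
  have x: "x \<in> hyd_space" unfolding x_def using \<psi> by (intro hyd_space_diff hyd_packet_in_space)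
  have "(\<Sum>k=1..N. hyd_W \<kappa> (B k) \<psi> t)
      \<le> A\<^sup>2 + c / 8 + D * (\<Sum>k=1..N. hyd_W \<kappa> (B k) (hyd_packet a L) t)"
    using sum_hyd_W_add_le[OF onb x hyd_packet_in_space[of a L] _ _ t, where A=A and \<epsilon>="c / 8" and \<kappa>=\<kappa> and N=N]
      close c
    by (simp add: x_def D_def mult.commute)
  also have "\<dots> \<le> A\<^sup>2 + c / 8 + D * (real N * (cmod a)\<^sup>2 * 2)"
  proof -
    have "1 + 128 * (real L)^3 * harm L / (t * \<kappa>\<^sup>2) \<le> 2"
      using dephased t \<kappa> by simp
    then have "real N * (cmod a)\<^sup>2 * (1 + 128 * (real L)^3 * harm L / (t * \<kappa>\<^sup>2))
        \<le> real N * (cmod a)\<^sup>2 * 2"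
      by (rule mult_left_mono) simp
    then have "(\<Sum>k=1..N. hyd_W \<kappa> (B k) (hyd_packet a L) t) \<le> real N * (cmod a)\<^sup>2 * 2"
      by (rule order_trans[OF sum_hyd_W_packet_le[OF \<kappa> t onb]])
    then show ?thesis using D by simp
  qed
  also have "\<dots> \<le> A\<^sup>2 + c / 8 + c / 16"
  proof -
    have "D * (real N * (cmod a)\<^sup>2 * 2) = (32 * real N * D) * ((cmod a)\<^sup>2 / 16)"
      by (simp add: algebra_simps)
    also have "\<dots> \<le> real L * ((cmod a)\<^sup>2 / 16)"
      using few_levels by (intro mult_right_mono) (simp_all add: D_def c_def)
    finally show ?thesis by (simp add: c_def)
  qed
  finally show ?thesis unfolding c_def by linarith
qed

lemma hyd_moment_sum_ge:
  fixes a :: complex and A :: real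
  assumes \<kappa>: "\<kappa> > 0" and onb: "hyd_onb B" and \<psi>: "\<psi> \<in> hyd_space" and t: "t > 0"
    and N: "N \<ge> 1" and a: "a \<noteq> 0" and p: "p \<ge> 0"
    and close: "hnorm (\<lambda>i. \<psi> i - hyd_packet a L i) \<le> A"
    and mass: "(cmod a)\<^sup>2 * real L / 2 \<le> (hnorm \<psi>)\<^sup>2 - A\<^sup>2"
    and dephased: "128 * (real L)^3 * harm L \<le> t * \<kappa>\<^sup>2"
    and few_levels: "32 * real N * (1 + 8 * A\<^sup>2 / ((cmod a)\<^sup>2 * real L)) \<le> real L"
  shows "ereal (real N powr p * ((cmod a)\<^sup>2 * real L / 8)) \<le> hyd_moment_sum \<kappa> p B \<psi> t"
proof -
  have "(cmod a)\<^sup>2 * real L / 8 \<le> (hnorm \<psi>)\<^sup>2 - (\<Sum>k=1..N. hyd_W \<kappa> (B k) \<psi> t)"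
  proof -
    have "0 \<le> (cmod a)\<^sup>2 * real L" by simp
    then show ?thesis
      using sum_hyd_W_near_packet_le[OF \<kappa> onb \<psi> t N a close dephased few_levels] mass by linarith
  qed
  then have "ereal (real N powr p * ((cmod a)\<^sup>2 * real L / 8))
      \<le> ereal (real N powr p * ((hnorm \<psi>)\<^sup>2 - (\<Sum>k=1..N. hyd_W \<kappa> (B k) \<psi> t)))"
    unfolding ereal_less_eq by (rule mult_left_mono) simp
  also have "\<dots> \<le> hyd_moment_sum \<kappa> p B \<psi> t"
    by (rule hyd_moment_sum_ge_tail[OF onb \<psi> t p])
  finally show ?thesis .
qed

section \<open>The residual set\<close>

lemma hyd_space_restrict:
  "\<phi> \<in> hyd_space \<Longrightarrow> (\<lambda>i. if i \<in> F then \<phi> i else 0) \<in> hyd_space"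
  by (rule hyd_spaceI) (auto simp: hyd_space_vanishes
      intro: summable_on_comparison_test[OF hyd_space_summable])

lemma hyd_space_truncation:
  assumes \<phi>: "\<phi> \<in> hyd_space" and e: "e > 0"
  obtains F where "finite F" "hnorm (\<lambda>i. if i \<in> F then 0 else \<phi> i) < e"
proof -
  define f where "f i = (cmod (\<phi> i))\<^sup>2" for i
  have f: "f summable_on UNIV" unfolding f_def using \<phi> by (rule hyd_space_summable)
  obtain F where F: "finite F" "dist (sum f F) (infsum f UNIV) \<le> e\<^sup>2 / 2"
    using has_sum_finite_approximation[OF has_sum_infsum[OF f], of "e\<^sup>2 / 2"] e by auto
  have split: "infsum f UNIV = sum f F + infsum f (- F)"
    using infsum_Un_disjoint[of f F "- F"] summable_on_subset_banach[OF f] F(1) by (simp add: Un_commute)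
  have tail: "(hnorm (\<lambda>i. if i \<in> F then 0 else \<phi> i))\<^sup>2 = infsum f (- F)"
    unfolding hnorm_power2 f_def by (intro infsum_cong_neutral) auto
  have "e\<^sup>2 > 0" using e by simp
  then have "(hnorm (\<lambda>i. if i \<in> F then 0 else \<phi> i))\<^sup>2 < e\<^sup>2"
    using split tail F(2) unfolding dist_real_def abs_le_iff by linarith
  then have "hnorm (\<lambda>i. if i \<in> F then 0 else \<phi> i) < e"
    using e by (simp add: power_less_imp_less_base)
  with F(1) show thesis by (rule that)
qed

lemma hyd_space_finite_levels_dense:
  assumes \<phi>: "\<phi> \<in> hyd_space" and e: "e > 0"
  obtains \<phi>\<^sub>0 L\<^sub>0 where "\<phi>\<^sub>0 \<in> hyd_space" "\<And>n l m. L\<^sub>0 < n \<Longrightarrow> \<phi>\<^sub>0 (n, l, m) = 0"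
    "hdist \<phi>\<^sub>0 \<phi> < e"
proof -
  obtain F where F: "finite F" and tail: "hnorm (\<lambda>i. if i \<in> F then 0 else \<phi> i) < e"
    using hyd_space_truncation[OF \<phi> e] by blast
  define \<phi>\<^sub>0 where "\<phi>\<^sub>0 = (\<lambda>i. if i \<in> F then \<phi> i else 0)"
  define L\<^sub>0 where "L\<^sub>0 = Max (insert 0 (fst ` F))"
  have "\<phi>\<^sub>0 \<in> hyd_space" unfolding \<phi>\<^sub>0_def using \<phi> by (rule hyd_space_restrict)
  moreover have "\<phi>\<^sub>0 (n, l, m) = 0" if "L\<^sub>0 < n" for n l m
    using that F Max_ge[of "insert 0 (fst ` F)" n] by (force simp: \<phi>\<^sub>0_def L\<^sub>0_def)
  moreover have "(\<lambda>i. \<phi> i - \<phi>\<^sub>0 i) = (\<lambda>i. if i \<in> F then 0 else \<phi> i)"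
    by (simp add: \<phi>\<^sub>0_def fun_eq_iff)
  then have "hdist \<phi>\<^sub>0 \<phi> = hnorm (\<lambda>i. if i \<in> F then 0 else \<phi> i)"
    by (simp add: hdist_def hnorm_minus_commute[of \<phi>\<^sub>0 \<phi>])
  ultimately show thesis using tail by (intro that[of \<phi>\<^sub>0 L\<^sub>0]) auto
qed

lemma harm_le_1_plus_ln: "L \<ge> 1 \<Longrightarrow> harm L \<le> 1 + ln (real L)"
  using euler_mascheroni_sequence_decreasing[of 1 L] by (simp add: harm_def)

lemma eventually_delocalization_scales:
  fixes \<kappa> c K T \<delta> :: real
  assumes "\<kappa> > 0" "c > 0" "0 < \<delta>" "\<delta> < 1/2"
  shows "eventually (\<lambda>L::nat.
      128 * (real L)^3 * (1 + ln (real L)) \<le> real L powr (3 + 3*\<delta>) * \<kappa>\<^sup>2 \<and>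
      32 * K * (real L powr (1 - 2*\<delta>) + 1) \<le> real L \<and>
      real L powr (- ((3 + 3*\<delta>) * \<delta>)) \<le> c / 8 \<and>
      T \<le> real L powr (3 + 3*\<delta>)) sequentially"
proof -
  have "eventually (\<lambda>x::real.
      128 * x^3 * (1 + ln x) \<le> x powr (3 + 3*\<delta>) * \<kappa>\<^sup>2 \<and>
      32 * K * (x powr (1 - 2*\<delta>) + 1) \<le> x \<and>
      x powr (- ((3 + 3*\<delta>) * \<delta>)) \<le> c / 8 \<and>
      T \<le> x powr (3 + 3*\<delta>)) at_top"
    using assms by (intro eventually_conj; real_asymp)
  then show ?thesis
    by (rule eventually_compose_filterlim[OF _ filterlim_real_sequentially])
qed

text \<open>By \<open>hyd_moment_sum_ge\<close>, a state in the \<open>j\<close>-th set has \<open>p\<close>-moment sum at least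
  \<open>t\<^bsup>p(1/3-\<delta>)-\<delta>\<^esup>\<close>, \<open>\<delta> = 1/(j+3)\<close>, at some time \<open>t \<ge> j + 2\<close>. The two conditions involving
  \<open>\<psi>\<close> are strict, which makes the set open.\<close>

definition hyd_delocalizing_set :: "real \<Rightarrow> nat \<Rightarrow> hvec set" where
  "hyd_delocalizing_set \<kappa> j = {\<psi> \<in> hyd_space. \<exists>t a L A N.
     real j + 2 \<le> t \<and> a \<noteq> 0 \<and> N \<ge> 1 \<and>
     hnorm (\<lambda>i. \<psi> i - hyd_packet a L i) < A \<and> (cmod a)\<^sup>2 * real L / 2 < (hnorm \<psi>)\<^sup>2 - A\<^sup>2 \<and>
     128 * (real L)^3 * harm L \<le> t * \<kappa>\<^sup>2 \<and>
     32 * real N * (1 + 8 * A\<^sup>2 / ((cmod a)\<^sup>2 * real L)) \<le> real L \<and>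
     t powr (1/3 - 1 / (real j + 3)) \<le> real N \<and> t powr (- (1 / (real j + 3))) \<le> (cmod a)\<^sup>2 * real L / 8}"

lemma exists_nat_between_powr:
  fixes L :: nat and \<delta> :: real
  assumes L: "L \<ge> 1" and \<delta>: "0 < \<delta>" "\<delta> \<le> 1/3"
  obtains N :: nat where "N \<ge> 1" "(real L powr (3 + 3*\<delta>)) powr (1/3 - \<delta>) \<le> real N"
    "real N \<le> real L powr (1 - 2*\<delta>) + 1"
proof
  define x where "x = (real L powr (3 + 3*\<delta>)) powr (1/3 - \<delta>)"
  have "x = real L powr ((3 + 3*\<delta>) * (1/3 - \<delta>))"
    by (simp add: x_def powr_powr)
  also have "\<dots> \<le> real L powr (1 - 2*\<delta>)"
    using L \<delta> by (intro powr_mono) (auto simp: algebra_simps)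
  finally have x_le: "x \<le> real L powr (1 - 2*\<delta>)" .
  have "x > 0" using L by (simp add: x_def)
  then have "real (nat \<lceil>x\<rceil>) = real_of_int \<lceil>x\<rceil>" by simp
  then show "x \<le> real (nat \<lceil>x\<rceil>)" "real (nat \<lceil>x\<rceil>) \<le> real L powr (1 - 2*\<delta>) + 1"
    using le_of_int_ceiling[of x] of_int_ceiling_le_add_one[of x] x_le by linarith+
  then show "nat \<lceil>x\<rceil> \<ge> 1" using \<open>x > 0\<close> by linarith
qed

lemma add_hyd_packet_in_delocalizing_set:
  fixes \<phi> :: hvec and a :: complex and L j :: nat and \<kappa> :: real
  defines "\<delta> \<equiv> 1 / (real j + 3)" and "c \<equiv> (cmod a)\<^sup>2 * real L"
  defines "A \<equiv> sqrt ((hnorm \<phi>)\<^sup>2 + c / 4)"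
  assumes \<phi>: "\<phi> \<in> hyd_space" and orth: "hinner \<phi> (hyd_packet a L) = 0" and c: "c > 0"
    and dephase: "128 * (real L)^3 * (1 + ln (real L)) \<le> real L powr (3 + 3*\<delta>) * \<kappa>\<^sup>2"
    and levels: "32 * (1 + 8 * A\<^sup>2 / c) * (real L powr (1 - 2*\<delta>) + 1) \<le> real L"
    and small: "real L powr (- ((3 + 3*\<delta>) * \<delta>)) \<le> c / 8"
    and late: "real j + 2 \<le> real L powr (3 + 3*\<delta>)"
  shows "(\<lambda>i. \<phi> i + hyd_packet a L i) \<in> hyd_delocalizing_set \<kappa> j"
proof -
  define t where "t = real L powr (3 + 3*\<delta>)"
  have a: "a \<noteq> 0" and L: "L \<ge> 1" using c by (auto simp: c_def Suc_le_eq intro: gr0I)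
  have "0 < \<delta>" "\<delta> \<le> 1/3" by (auto simp: \<delta>_def field_simps)
  then obtain N where N: "N \<ge> 1" "t powr (1/3 - \<delta>) \<le> real N" "real N \<le> real L powr (1 - 2*\<delta>) + 1"
    unfolding t_def using exists_nat_between_powr[OF L] by blast
  have close: "hnorm (\<lambda>i. (\<phi> i + hyd_packet a L i) - hyd_packet a L i) < A"
    using c by (simp add: A_def real_less_rsqrt)
  have "(hnorm (\<lambda>i. \<phi> i + hyd_packet a L i))\<^sup>2 = (hnorm \<phi>)\<^sup>2 + c"
    using hnorm_add_power2[OF \<phi> hyd_packet_in_space] orth by (simp add: hnorm_hyd_packet_power2 c_def)
  then have mass: "c / 2 < (hnorm (\<lambda>i. \<phi> i + hyd_packet a L i))\<^sup>2 - A\<^sup>2"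
    using c by (simp add: A_def)
  have dephased: "128 * (real L)^3 * harm L \<le> t * \<kappa>\<^sup>2"
    using dephase mult_left_mono[OF harm_le_1_plus_ln[OF L], of "128 * (real L)^3"] by (simp add: t_def)
  have "32 * real N * (1 + 8 * A\<^sup>2 / c) \<le> 32 * (1 + 8 * A\<^sup>2 / c) * (real L powr (1 - 2*\<delta>) + 1)"
    using mult_left_mono[OF N(3), of "32 * (1 + 8 * A\<^sup>2 / c)"] c by (simp add: mult_ac)
  with levels have few_levels: "32 * real N * (1 + 8 * A\<^sup>2 / c) \<le> real L" by linarith
  have small_t: "t powr (- \<delta>) \<le> c / 8"
    using small by (simp add: t_def powr_powr)
  have late_t: "real j + 2 \<le> t" using late by (simp add: t_def)
  show ?thesis
    unfolding hyd_delocalizing_set_def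
    using hyd_space_add[OF \<phi> hyd_packet_in_space] late_t a N(1,2) close mass dephased few_levels small_t
    unfolding c_def \<delta>_def by blast
qed

lemma hyd_delocalizing_set_open: "hyd_open (hyd_delocalizing_set \<kappa> j)"
  unfolding hyd_open_def
proof (intro conjI ballI)
  show "hyd_delocalizing_set \<kappa> j \<subseteq> hyd_space"
    unfolding hyd_delocalizing_set_def by blast
  fix \<psi> assume "\<psi> \<in> hyd_delocalizing_set \<kappa> j"
  then obtain t a L A N where \<psi>: "\<psi> \<in> hyd_space"
    and params: "real j + 2 \<le> t" "a \<noteq> 0" "N \<ge> 1"
      "128 * (real L)^3 * harm L \<le> t * \<kappa>\<^sup>2"
      "32 * real N * (1 + 8 * A\<^sup>2 / ((cmod a)\<^sup>2 * real L)) \<le> real L"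
      "t powr (1/3 - 1 / (real j + 3)) \<le> real N" "t powr (- (1 / (real j + 3))) \<le> (cmod a)\<^sup>2 * real L / 8"
    and close: "hnorm (\<lambda>i. \<psi> i - hyd_packet a L i) < A"
    and mass: "(cmod a)\<^sup>2 * real L / 2 < (hnorm \<psi>)\<^sup>2 - A\<^sup>2"
    unfolding hyd_delocalizing_set_def by blast
  define r where "r = sqrt (A\<^sup>2 + (cmod a)\<^sup>2 * real L / 2)"
  have r: "r < hnorm \<psi>"
    using mass by (simp add: r_def real_sqrt_less_iff real_less_lsqrt)
  define e where "e = min (A - hnorm (\<lambda>i. \<psi> i - hyd_packet a L i)) (hnorm \<psi> - r)"
  have "e > 0" using close r by (simp add: e_def)
  moreover have "y \<in> hyd_delocalizing_set \<kappa> j" if y: "y \<in> hyd_space" and "hdist y \<psi> < e" for y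
  proof -
    have "hnorm (\<lambda>i. y i - hyd_packet a L i) \<le> hdist y \<psi> + hnorm (\<lambda>i. \<psi> i - hyd_packet a L i)"
      using hdist_triangle[OF y \<psi> hyd_packet_in_space] by (simp add: hdist_def)
    then have "hnorm (\<lambda>i. y i - hyd_packet a L i) < A"
      using \<open>hdist y \<psi> < e\<close> by (simp add: e_def)
    moreover have "r < hnorm y"
      using abs_hnorm_diff_le_hdist[OF y \<psi>] \<open>hdist y \<psi> < e\<close> unfolding e_def by linarith
    then have "r\<^sup>2 < (hnorm y)\<^sup>2"
      by (intro power_strict_mono) (auto simp: r_def)
    then have "(cmod a)\<^sup>2 * real L / 2 < (hnorm y)\<^sup>2 - A\<^sup>2"
      by (simp add: r_def)
    ultimately show ?thesis
      unfolding hyd_delocalizing_set_def using y params by blast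
  qed
  ultimately show "\<exists>e>0. \<forall>y\<in>hyd_space. hdist y \<psi> < e \<longrightarrow> y \<in> hyd_delocalizing_set \<kappa> j"
    by blast
qed

lemma hyd_delocalizing_set_dense:
  assumes \<kappa>: "\<kappa> > 0"
  shows "hyd_dense (hyd_delocalizing_set \<kappa> j)"
  unfolding hyd_dense_def
proof (intro ballI allI impI)
  fix \<phi> :: hvec and e :: real
  assume \<phi>: "\<phi> \<in> hyd_space" and e: "e > 0"
  then obtain \<phi>\<^sub>0 L\<^sub>0 where \<phi>\<^sub>0: "\<phi>\<^sub>0 \<in> hyd_space" and low: "\<And>n l m. L\<^sub>0 < n \<Longrightarrow> \<phi>\<^sub>0 (n, l, m) = 0"
    and near: "hdist \<phi>\<^sub>0 \<phi> < e / 2"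
    using hyd_space_finite_levels_dense[of \<phi> "e / 2"] by auto
  define c where "c = e\<^sup>2 / 16"
  define A where "A = sqrt ((hnorm \<phi>\<^sub>0)\<^sup>2 + c / 4)"
  define \<delta> where "\<delta> = 1 / (real j + 3)"
  have "c > 0" "0 < \<delta>" "\<delta> < 1/2" using e by (auto simp: c_def \<delta>_def field_simps)
  from eventually_happens'[OF sequentially_bot eventually_conj[OF
      eventually_delocalization_scales[OF \<kappa> this, of "1 + 8 * A\<^sup>2 / c" "real j + 2"]
      eventually_gt_at_top[of L\<^sub>0]]]
  obtain L where L: "L > L\<^sub>0"
    and scales: "128 * (real L)^3 * (1 + ln (real L)) \<le> real L powr (3 + 3*\<delta>) * \<kappa>\<^sup>2"
      "32 * (1 + 8 * A\<^sup>2 / c) * (real L powr (1 - 2*\<delta>) + 1) \<le> real L"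
      "real L powr (- ((3 + 3*\<delta>) * \<delta>)) \<le> c / 8" "real j + 2 \<le> real L powr (3 + 3*\<delta>)"
    by blast
  define a where "a = complex_of_real (e / (4 * sqrt (real L)))"
  have a_L: "cmod a * sqrt (real L) = e / 4"
    unfolding a_def norm_of_real using L e by simp
  then have packet: "hnorm (hyd_packet a L) = e / 4"
    by (simp add: hnorm_hyd_packet)
  have "(cmod a * sqrt (real L))\<^sup>2 = (e / 4)\<^sup>2" by (simp only: a_L)
  then have ca: "(cmod a)\<^sup>2 * real L = c"
    by (simp add: c_def power_mult_distrib power_divide)
  have orth: "hinner \<phi>\<^sub>0 (hyd_packet a L) = 0"
    using low L by (intro hinner_hyd_packet_eq_0[where L\<^sub>0=L\<^sub>0]) auto
  have "(\<lambda>i. \<phi>\<^sub>0 i + hyd_packet a L i) \<in> hyd_delocalizing_set \<kappa> j"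
    using \<open>c > 0\<close> scales unfolding A_def \<delta>_def
    by (rule add_hyd_packet_in_delocalizing_set[OF \<phi>\<^sub>0 orth, unfolded ca])
  moreover have "hdist (\<lambda>i. \<phi>\<^sub>0 i + hyd_packet a L i) \<phi> < e"
  proof -
    have "hdist (\<lambda>i. \<phi>\<^sub>0 i + hyd_packet a L i) \<phi>
        \<le> hdist (\<lambda>i. \<phi>\<^sub>0 i + hyd_packet a L i) \<phi>\<^sub>0 + hdist \<phi>\<^sub>0 \<phi>"
      using \<phi> \<phi>\<^sub>0 by (intro hdist_triangle hyd_space_add hyd_packet_in_space)
    also have "hdist (\<lambda>i. \<phi>\<^sub>0 i + hyd_packet a L i) \<phi>\<^sub>0 = e / 4"
      using packet by (simp add: hdist_def)
    finally show ?thesis using near e by linarith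
  qed
  ultimately show "\<exists>\<psi>\<in>hyd_delocalizing_set \<kappa> j. hdist \<psi> \<phi> < e" by blast
qed

lemma ln_hyd_moment_div_ln_ge:
  assumes t: "t > 1" and p: "p > 0" and moment: "ereal (t powr (p * \<gamma>)) \<le> hyd_moment_sum \<kappa> p B \<psi> t"
  shows "ereal \<gamma> \<le> (let r = hyd_moment \<kappa> p B \<psi> t in
           if r = \<infinity> then \<infinity> else ereal (ln (real_of_ereal r) / ln t))"
proof (cases "hyd_moment_sum \<kappa> p B \<psi> t")
  case (real s)
  then have s: "t powr (p * \<gamma>) \<le> s" using moment by simp
  moreover have "t powr (p * \<gamma>) > 0" using t by simp
  ultimately have "s > 0" by linarith
  have "\<gamma> = ln (t powr (p * \<gamma>)) / (p * ln t)" using t p by (simp add: ln_powr)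
  also have "\<dots> \<le> ln s / (p * ln t)"
  proof (rule divide_right_mono)
    show "ln (t powr (p * \<gamma>)) \<le> ln s" using s t \<open>s > 0\<close> by (subst ln_le_cancel_iff) auto
  qed (use t p in simp)
  also have "\<dots> = ln (s powr (1 / p)) / ln t"
    using \<open>s > 0\<close> by (simp add: ln_powr)
  finally show ?thesis using real by (simp add: hyd_moment_def)
qed (use moment in \<open>auto simp: hyd_moment_def\<close>)

lemma hyd_beta_plus_ge:
  fixes \<delta> :: "nat \<Rightarrow> real"
  assumes p: "p > 0" and \<delta>: "\<delta> \<longlonglongrightarrow> 0"
    and moments: "\<And>j. \<exists>t \<ge> real j + 2. ereal (t powr (p * (\<beta> - \<delta> j))) \<le> hyd_moment_sum \<kappa> p B \<psi> t"
  shows "ereal \<beta> \<le> hyd_beta_plus \<kappa> \<psi> p B"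
proof (rule ccontr)
  define f where "f = (\<lambda>t. let r = hyd_moment \<kappa> p B \<psi> t in
    if r = \<infinity> then \<infinity> else ereal (ln (real_of_ereal r) / ln t))"
  assume "\<not> ereal \<beta> \<le> hyd_beta_plus \<kappa> \<psi> p B"
  then have "Limsup at_top f < ereal \<beta>" by (simp add: hyd_beta_plus_def f_def not_le)
  then obtain y where y: "Limsup at_top f < ereal y" "y < \<beta>"
    using ereal_dense2 by (metis ereal_less(2) less_ereal.simps(1))
  then obtain T where T: "\<And>t. t \<ge> T \<Longrightarrow> f t < ereal y"
    using Limsup_lessD[OF y(1)] by (auto simp: eventually_at_top_linorder)
  have "eventually (\<lambda>j. \<delta> j < \<beta> - y) sequentially"
    using y(2) by (intro order_tendstoD(2)[OF \<delta>]) simp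
  moreover have "eventually (\<lambda>j. T \<le> real j) sequentially"
    using filterlim_real_sequentially unfolding filterlim_at_top by blast
  ultimately have "eventually (\<lambda>j. \<delta> j < \<beta> - y \<and> T \<le> real j) sequentially"
    by (rule eventually_conj)
  then obtain j where j: "\<delta> j < \<beta> - y" "T \<le> real j"
    unfolding eventually_sequentially by blast
  obtain t where t: "t \<ge> real j + 2" and "ereal (t powr (p * (\<beta> - \<delta> j))) \<le> hyd_moment_sum \<kappa> p B \<psi> t"
    using moments by blast
  then have "ereal (\<beta> - \<delta> j) \<le> f t"
    unfolding f_def using p by (intro ln_hyd_moment_div_ln_ge) auto
  moreover have "f t < ereal y" using t j by (intro T) simp
  moreover have "ereal y < ereal (\<beta> - \<delta> j)" using j(1) by simp
  ultimately show False by (meson less_trans not_le)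
qed

lemma hyd_delocalizing_set_moment:
  assumes \<kappa>: "\<kappa> > 0" and \<psi>: "\<psi> \<in> hyd_delocalizing_set \<kappa> j" and onb: "hyd_onb B" and p: "p > 0"
  shows "\<exists>t \<ge> real j + 2.
    ereal (t powr (p * (1/3 - (1 + 1/p) / (real j + 3)))) \<le> hyd_moment_sum \<kappa> p B \<psi> t"
proof -
  define \<delta> where "\<delta> = 1 / (real j + 3)"
  obtain t a L A N where "\<psi> \<in> hyd_space" and t: "real j + 2 \<le> t" and "a \<noteq> 0" "N \<ge> 1"
      "hnorm (\<lambda>i. \<psi> i - hyd_packet a L i) < A" "(cmod a)\<^sup>2 * real L / 2 < (hnorm \<psi>)\<^sup>2 - A\<^sup>2"
      "128 * (real L)^3 * harm L \<le> t * \<kappa>\<^sup>2"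
      "32 * real N * (1 + 8 * A\<^sup>2 / ((cmod a)\<^sup>2 * real L)) \<le> real L"
    and N: "t powr (1/3 - \<delta>) \<le> real N" and c: "t powr (- \<delta>) \<le> (cmod a)\<^sup>2 * real L / 8"
    using \<psi> unfolding hyd_delocalizing_set_def \<delta>_def by blast
  then have "ereal (real N powr p * ((cmod a)\<^sup>2 * real L / 8)) \<le> hyd_moment_sum \<kappa> p B \<psi> t"
    using t p by (intro hyd_moment_sum_ge[OF \<kappa> onb]) auto
  moreover have "p * (1/3 - (1 + 1/p) / (real j + 3)) = (1/3 - \<delta>) * p + - \<delta>"
    using p by (simp add: \<delta>_def divide_simps) (simp add: algebra_simps)
  then have "t powr (p * (1/3 - (1 + 1/p) / (real j + 3))) = (t powr (1/3 - \<delta>)) powr p * t powr (- \<delta>)"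
    by (simp only: powr_add powr_powr)
  moreover have "\<dots> \<le> real N powr p * ((cmod a)\<^sup>2 * real L / 8)"
    using N c p by (intro mult_mono powr_mono2) auto
  ultimately show ?thesis using t by (metis ereal_less_eq(3) order_trans)
qed

theorem theorem2:
  fixes \<kappa> :: real
  assumes "\<kappa> > 0"
  shows "\<exists>R. hyd_generic R \<and>
           (\<forall>\<psi>\<in>R. \<forall>B. hyd_onb B \<longrightarrow>
              (\<forall>p>0. hyd_beta_plus \<kappa> \<psi> p B \<ge> ereal (1/3)) \<and>
              (\<exists>p>0. hyd_beta_plus \<kappa> \<psi> p B > 0))"
proof -
  define R where "R = (\<Inter>j. hyd_delocalizing_set \<kappa> j)"
  have "hyd_generic R"
    unfolding hyd_generic_def R_def using hyd_delocalizing_set_open hyd_delocalizing_set_dense[OF assms]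
    by (intro exI[of _ "hyd_delocalizing_set \<kappa>"]) simp
  moreover have "(\<forall>p>0. hyd_beta_plus \<kappa> \<psi> p B \<ge> ereal (1/3)) \<and> (\<exists>p>0. hyd_beta_plus \<kappa> \<psi> p B > 0)"
    if \<psi>: "\<psi> \<in> R" and onb: "hyd_onb B" for \<psi> B
  proof -
    have third: "hyd_beta_plus \<kappa> \<psi> p B \<ge> ereal (1/3)" if p: "p > 0" for p
    proof (rule hyd_beta_plus_ge[OF p])
      show "(\<lambda>j. (1 + 1/p) / (real j + 3)) \<longlonglongrightarrow> 0" by real_asymp
      show "\<exists>t \<ge> real j + 2. ereal (t powr (p * (1/3 - (1 + 1/p) / (real j + 3))))
          \<le> hyd_moment_sum \<kappa> p B \<psi> t" for j
        using \<psi> onb p by (intro hyd_delocalizing_set_moment[OF assms]) (auto simp: R_def)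
    qed
    moreover have "hyd_beta_plus \<kappa> \<psi> 1 B > 0"
      using third[OF zero_less_one] by (rule order.strict_trans2[rotated]) simp
    ultimately show ?thesis using zero_less_one by blast
  qed
  ultimately show ?thesis by blast
qed

end
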